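(* Under the hypotheses that $\sigma\in C^2(\mathbb{R})$ and that $\theta=\theta(\xi)$ is a twice differentiable reparametrization, for all indices $i,j,k,l$ of $\xi$: $$[\mathrm{Cov}(\hat{\mathcal{I}}_1(\xi))]^{ijkl}=\frac{\partial\theta_a}{\partial\xi_i}\frac{\partial\theta_b}{\partial\xi_j}\frac{\partial\theta_c}{\partial\xi_k}\frac{\partial\theta_d}{\partial\xi_l}[\mathrm{Cov}(\hat{\mathcal{I}}_1(\theta))]^{abcd},$$ $$[\mathrm{Cov}(\hat{\mathcal{I}}_2(\xi))]^{ijkl}=\frac{\partial\theta_a}{\partial\xi_i}\frac{\partial\theta_b}{\partial\xi_j}\frac{\partial\theta_c}{\partial\xi_k}\frac{\partial\theta_d}{\partial\xi_l}[\mathrm{Cov}(\hat{\mathcal{I}}_2(\theta))]^{abcd}+\frac1N\,\mathcal{C}^{\alpha\beta}_{ijkl}\,\mathcal{I}_{\alpha\beta}(h_L),$$ where $$\mathcal{C}^{\alpha\beta}_{ijkl}=\frac{\partial\theta_a}{\partial\xi_i}\frac{\partial\theta_b}{\partial\xi_j}\frac{\partial^2\theta_c}{\partial\xi_k\partial\xi_l}\partial_a\partial_bh_L^\alpha\,\partial_ch_L^\beta+\frac{\partial^2\theta_a}{\partial\xi_i\partial\xi_j}\frac{\partial\theta_b}{\partial\xi_k}\frac{\partial\theta_c}{\partial\xi_l}\partial_ah_L^\alpha\,\partial_b\partial_ch_L^\beta+\frac{\partial^2\theta_a}{\partial\xi_i\partial\xi_j}\frac{\partial^2\theta_b}{\partial\xi_k\partial\xi_l}\partial_ah_L^\alpha\,\partial_bh_L^\beta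 .$$
   Context: Setup. Fix an input $x\in\mathbb{R}^{n_0}$ and integers $L\ge1$, $n_1,\dots,n_L\ge1$. Network. The parameters are $\theta=(W_0,\dots,W_{L-1})$, with $W_l\in\mathbb{R}^{n_{l+1}\times(n_l+1)}$, viewed as a vector in $\mathbb{R}^{\dim\theta}$. Let $\sigma$ be applied entrywise. Set $h_0=x$ and $\bar h_l=(h_l^\top,1)^\top$. For $1\le l\le L-1$ let $h_l=\sigma(W_{l-1}\bar h_{l-1})$, and let $h_L=W_{L-1}\bar h_{L-1}\in\mathbb{R}^{n_L}$. Exponential family. The model is $p(y\mid x,\theta)=\exp(t(y)^\top h_L-F(h_L))$ with respect to a base measure $\nu$, where $t(y)\in\mathbb{R}^{n_L}$ and $F(h)=\log\int\exp(t(y)^\top h)\,d\nu(y)$. Assume $h_L$ lies in the interior of the natural parameter space. Let $\mathcal{I}(h_L)=\nabla^2F(h_L)=\mathrm{Cov}(t(y))$, with $y\sim p(y\mid x,\theta)$. Estimators. For a parameter vector $\phi$ (either $\theta$ or $\xi$) and i.i.d. samples $y_1,\dots,y_N\sim p(y\mid x,\theta)$ with $\ell_i=\log p(y_i\mid x,\theta)$, define $\hat{\mathcal{I}}_1(\phi)=\frac1N\sum_i\frac{\partial\ell_i}{\partial\phi}\frac{\partial\ell_i}{\partial\phi^\top}$ and $\hat{\mathcal{I}}_2(\phi)=\frac1N\sum_i(-\frac{\partial^2\ell_i}{\partial\phi\partial\phi^\top})$. The estimators in both coordinate systems use the same samples. Notation. $[\mathrm{Cov}(\hat{\mathcal{I}}(\phi))]^{ijkl}=\mathrm{Cov}(\hat{\mathcal{I}}^{ij}(\phi),\hat{\mathcal{I}}^{kl}(\phi))$.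 $\partial_a=\partial/\partial\theta_a$. Repeated indices $a,b,c,d$ and $\alpha,\beta$ are summed. *)

theory Defs
  imports "HOL-Probability.Probability"
begin

text \<open>Parameters theta = (W_0,...,W_{L-1}) are represented as a function on index triples
  (l, r, c): W_l has entry theta (l,r,c) in row r < n (l+1), column c \<le> n l, where column
  c = n l multiplies the constant 1 of the augmented vector (bias column).\<close>

definition param_idx :: "nat \<Rightarrow> (nat \<Rightarrow> nat) \<Rightarrow> (nat \<times> nat \<times> nat) set" where
  "param_idx L n = {(l, r, c). l < L \<and> r < n (Suc l) \<and> c \<le> n l}"

fun layer :: "(real \<Rightarrow> real) \<Rightarrow> nat \<Rightarrow> (nat \<Rightarrow> nat) \<Rightarrow> (nat \<Rightarrow> real)
    \<Rightarrow> (nat \<times> nat \<times> nat \<Rightarrow> real) \<Rightarrow> nat \<Rightarrow> (nat \<Rightarrow> real)" where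
  "layer \<sigma> L n x \<theta> 0 = x"
| "layer \<sigma> L n x \<theta> (Suc l) =
     (\<lambda>r. let z = (\<Sum>c<n l. \<theta> (l, r, c) * layer \<sigma> L n x \<theta> l c) + \<theta> (l, r, n l)
          in if Suc l < L then \<sigma> z else z)"

definition hL :: "(real \<Rightarrow> real) \<Rightarrow> nat \<Rightarrow> (nat \<Rightarrow> nat) \<Rightarrow> (nat \<Rightarrow> real)
    \<Rightarrow> (nat \<times> nat \<times> nat \<Rightarrow> real) \<Rightarrow> nat \<Rightarrow> real" where
  "hL \<sigma> L n x \<theta> = layer \<sigma> L n x \<theta> L"

definition tdot :: "('y \<Rightarrow> nat \<Rightarrow> real) \<Rightarrow> nat \<Rightarrow> 'y \<Rightarrow> (nat \<Rightarrow> real) \<Rightarrow> real" where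
  "tdot t m y h = (\<Sum>\<alpha><m. t y \<alpha> * h \<alpha>)"

definition Zpart :: "'y measure \<Rightarrow> ('y \<Rightarrow> nat \<Rightarrow> real) \<Rightarrow> nat \<Rightarrow> (nat \<Rightarrow> real) \<Rightarrow> ennreal" where
  "Zpart \<nu> t m h = (\<integral>\<^sup>+ y. ennreal (exp (tdot t m y h)) \<partial>\<nu>)"

definition logpart :: "'y measure \<Rightarrow> ('y \<Rightarrow> nat \<Rightarrow> real) \<Rightarrow> nat \<Rightarrow> (nat \<Rightarrow> real) \<Rightarrow> real" where
  "logpart \<nu> t m h = ln (enn2real (Zpart \<nu> t m h))"

definition nat_param_space :: "'y measure \<Rightarrow> ('y \<Rightarrow> nat \<Rightarrow> real) \<Rightarrow> nat \<Rightarrow> (nat \<Rightarrow> real) set" where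
  "nat_param_space \<nu> t m = {h. 0 < Zpart \<nu> t m h \<and> Zpart \<nu> t m h < \<infinity>}"

definition in_nat_interior :: "'y measure \<Rightarrow> ('y \<Rightarrow> nat \<Rightarrow> real) \<Rightarrow> nat \<Rightarrow> (nat \<Rightarrow> real) \<Rightarrow> bool" where
  "in_nat_interior \<nu> t m h \<longleftrightarrow>
     (\<exists>\<epsilon>>0. \<forall>h'. (\<forall>\<alpha><m. \<bar>h' \<alpha> - h \<alpha>\<bar> < \<epsilon>) \<longrightarrow> h' \<in> nat_param_space \<nu> t m)"

definition expfam_dens :: "'y measure \<Rightarrow> ('y \<Rightarrow> nat \<Rightarrow> real) \<Rightarrow> nat \<Rightarrow> (nat \<Rightarrow> real) \<Rightarrow> 'y \<Rightarrow> real" where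
  "expfam_dens \<nu> t m h y = exp (tdot t m y h - logpart \<nu> t m h)"

definition expfam :: "'y measure \<Rightarrow> ('y \<Rightarrow> nat \<Rightarrow> real) \<Rightarrow> nat \<Rightarrow> (nat \<Rightarrow> real) \<Rightarrow> 'y measure" where
  "expfam \<nu> t m h = density \<nu> (\<lambda>y. ennreal (expfam_dens \<nu> t m h y))"

definition cov :: "'a measure \<Rightarrow> ('a \<Rightarrow> real) \<Rightarrow> ('a \<Rightarrow> real) \<Rightarrow> real" where
  "cov M X Y = (\<integral>\<omega>. (X \<omega> - (\<integral>\<omega>'. X \<omega>' \<partial>M)) * (Y \<omega> - (\<integral>\<omega>'. Y \<omega>' \<partial>M)) \<partial>M)"

text \<open>\<I>(h) = Cov(t(y)), y ~ p(y | h)  (= Hessian of F at h).\<close>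
definition fisher_h :: "'y measure \<Rightarrow> ('y \<Rightarrow> nat \<Rightarrow> real) \<Rightarrow> nat \<Rightarrow> (nat \<Rightarrow> real) \<Rightarrow> nat \<Rightarrow> nat \<Rightarrow> real" where
  "fisher_h \<nu> t m h \<alpha> \<beta> = cov (expfam \<nu> t m h) (\<lambda>y. t y \<alpha>) (\<lambda>y. t y \<beta>)"

definition pdt :: "((nat \<times> nat \<times> nat \<Rightarrow> real) \<Rightarrow> real) \<Rightarrow> nat \<times> nat \<times> nat
    \<Rightarrow> (nat \<times> nat \<times> nat \<Rightarrow> real) \<Rightarrow> real" where
  "pdt f a \<theta> = deriv (\<lambda>s. f (\<theta>(a := \<theta> a + s))) 0"

definition pdx :: "(real^'m \<Rightarrow> real) \<Rightarrow> 'm \<Rightarrow> real^'m \<Rightarrow> real" where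
  "pdx f i \<xi> = deriv (\<lambda>s. f (\<xi> + s *\<^sub>R axis i 1)) 0"

definition C2_real :: "(real \<Rightarrow> real) \<Rightarrow> bool" where
  "C2_real f \<longleftrightarrow> (\<exists>f' f''. (\<forall>z. (f has_real_derivative f' z) (at z)) \<and>
      (\<forall>z. (f' has_real_derivative f'' z) (at z)) \<and> continuous_on UNIV f'')"

definition twice_differentiable :: "(real^'m \<Rightarrow> real) \<Rightarrow> bool" where
  "twice_differentiable g \<longleftrightarrow> (\<exists>G :: real^'m \<Rightarrow> real^'m.
      (\<forall>\<xi>. (g has_derivative (\<lambda>v. G \<xi> \<bullet> v)) (at \<xi>)) \<and> (\<forall>\<xi>. G differentiable (at \<xi>)))"

definition loglik :: "(real \<Rightarrow> real) \<Rightarrow> nat \<Rightarrow> (nat \<Rightarrow> nat) \<Rightarrow> (nat \<Rightarrow> real) \<Rightarrow> 'y measure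
    \<Rightarrow> ('y \<Rightarrow> nat \<Rightarrow> real) \<Rightarrow> (nat \<times> nat \<times> nat \<Rightarrow> real) \<Rightarrow> 'y \<Rightarrow> real" where
  "loglik \<sigma> L n x \<nu> t \<theta> y = ln (expfam_dens \<nu> t (n L) (hL \<sigma> L n x \<theta>) y)"

definition sample_space :: "(real \<Rightarrow> real) \<Rightarrow> nat \<Rightarrow> (nat \<Rightarrow> nat) \<Rightarrow> (nat \<Rightarrow> real) \<Rightarrow> 'y measure
    \<Rightarrow> ('y \<Rightarrow> nat \<Rightarrow> real) \<Rightarrow> nat \<Rightarrow> (nat \<times> nat \<times> nat \<Rightarrow> real) \<Rightarrow> (nat \<Rightarrow> 'y) measure" where
  "sample_space \<sigma> L n x \<nu> t N \<theta>0 = PiM {..<N} (\<lambda>_. expfam \<nu> t (n L) (hL \<sigma> L n x \<theta>0))"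

definition I1_theta where
  "I1_theta \<sigma> L n x \<nu> t N \<theta>0 a b ys = (1 / real N) * (\<Sum>s<N.
      pdt (\<lambda>\<theta>. loglik \<sigma> L n x \<nu> t \<theta> (ys s)) a \<theta>0 *
      pdt (\<lambda>\<theta>. loglik \<sigma> L n x \<nu> t \<theta> (ys s)) b \<theta>0)"

definition I2_theta where
  "I2_theta \<sigma> L n x \<nu> t N \<theta>0 a b ys = (1 / real N) * (\<Sum>s<N.
      - pdt (pdt (\<lambda>\<theta>. loglik \<sigma> L n x \<nu> t \<theta> (ys s)) b) a \<theta>0)"

definition I1_xi where
  "I1_xi \<sigma> L n x \<nu> t N \<Theta> \<xi>0 i j ys = (1 / real N) * (\<Sum>s<N.
      pdx (\<lambda>\<xi>. loglik \<sigma> L n x \<nu> t (\<Theta> \<xi>) (ys s)) i \<xi>0 *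
      pdx (\<lambda>\<xi>. loglik \<sigma> L n x \<nu> t (\<Theta> \<xi>) (ys s)) j \<xi>0)"

definition I2_xi where
  "I2_xi \<sigma> L n x \<nu> t N \<Theta> \<xi>0 i j ys = (1 / real N) * (\<Sum>s<N.
      - pdx (pdx (\<lambda>\<xi>. loglik \<sigma> L n x \<nu> t (\<Theta> \<xi>) (ys s)) j) i \<xi>0)"

end

theory Submission
  imports Defs
begin

text \<open>
  The log-likelihood of the model is affine in the sufficient statistic,
  \<open>\<ell>\<^sub>y(\<theta>) = t(y)\<^sup>T h\<^sub>L(\<theta>) - F(h\<^sub>L(\<theta>))\<close>, so every derivative of \<open>\<ell>\<^sub>y\<close> in \<open>\<theta>\<close> is an affine
  function of \<open>t(y)\<close>. By the chain rule the \<open>\<xi>\<close>-score is the \<open>\<theta>\<close>-score contracted with the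
  Jacobian of \<open>\<theta>(\<xi>)\<close>; hence \<open>\<I>\<^sub>1(\<xi>)\<close> is a fixed linear combination of the entries of
  \<open>\<I>\<^sub>1(\<theta>)\<close> and its covariance transforms as a tensor by bilinearity. The \<open>\<xi>\<close>-Hessian
  acquires the extra term \<open>\<partial>\<^sub>i\<partial>\<^sub>j\<theta>\<^sub>a \<partial>\<^sub>a\<ell>\<close>. Since both Hessians are affine in \<open>t(y)\<close>, the
  covariance of the sample means is \<open>1/N\<close> times a quadratic form in \<open>Cov(t(y)) = \<I>(h\<^sub>L)\<close>;
  expanding that square gives the correction term.

  The analytic work is to justify the derivatives: \<open>\<sigma> \<in> C\<^sup>2\<close> makes the network twice
  differentiable, and near an interior point of the natural parameter space \<open>exp(\<delta>|t|)\<close> is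
  integrable, which allows differentiating the partition function twice under the integral and
  makes every polynomial in \<open>t\<close> square integrable.
\<close>

section \<open>Finitely supported vectors\<close>

text \<open>Parameters are functions on the infinite index type \<open>nat \<times> nat \<times> nat\<close> of which only the
  finitely many coordinates in \<open>param_idx\<close> matter; derivatives are taken in the \<open>\<ell>\<^sup>1\<close>-normed space
  of finitely supported real functions.\<close>

typedef 'a fsvec = "{f :: 'a \<Rightarrow> real. finite {x. f x \<noteq> 0}}"
  morphisms coord Abs_fsvec
  by (rule exI[of _ "\<lambda>_. 0"]) simp

setup_lifting type_definition_fsvec

lemma finite_nonzero_coord [simp, intro]: "finite {x. coord v x \<noteq> 0}"
  using coord[of v] by simp

instantiation fsvec :: (type) real_vector
begin

lift_definition zero_fsvec :: "'a fsvec" is "\<lambda>_. 0" by simp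

lift_definition plus_fsvec :: "'a fsvec \<Rightarrow> 'a fsvec \<Rightarrow> 'a fsvec" is "\<lambda>f g x. f x + g x"
  by (rule finite_subset[rotated, OF finite_UnI], assumption+) auto

lift_definition uminus_fsvec :: "'a fsvec \<Rightarrow> 'a fsvec" is "\<lambda>f x. - f x" by simp

lift_definition minus_fsvec :: "'a fsvec \<Rightarrow> 'a fsvec \<Rightarrow> 'a fsvec" is "\<lambda>f g x. f x - g x"
  by (rule finite_subset[rotated, OF finite_UnI], assumption+) auto

lift_definition scaleR_fsvec :: "real \<Rightarrow> 'a fsvec \<Rightarrow> 'a fsvec" is "\<lambda>c f x. c * f x"
  by (rule finite_subset[rotated]) auto

instance
  by standard (transfer; auto simp: algebra_simps)+

end

lemma coord_zero [simp]: "coord 0 = (\<lambda>_. 0)" by transfer simp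
lemma coord_add [simp]: "coord (u + v) x = coord u x + coord v x" by transfer simp
lemma coord_diff [simp]: "coord (u - v) x = coord u x - coord v x" by transfer simp
lemma coord_scaleR [simp]: "coord (c *\<^sub>R v) x = c * coord v x" by transfer simp

lemma coord_sum [simp]: "coord (sum f A) x = (\<Sum>a\<in>A. coord (f a) x)"
  by (induction A rule: infinite_finite_induct) auto

lemma fsvec_eqI: "(\<And>x. coord u x = coord v x) \<Longrightarrow> u = v"
  by (metis coord_inject ext)

definition fsvec_support :: "'a fsvec \<Rightarrow> 'a set" where
  "fsvec_support v = {x. coord v x \<noteq> 0}"

instantiation fsvec :: (type) real_normed_vector
begin

definition norm_fsvec :: "'a fsvec \<Rightarrow> real" where
  "norm_fsvec v = (\<Sum>x\<in>fsvec_support v. \<bar>coord v x\<bar>)"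

definition sgn_fsvec :: "'a fsvec \<Rightarrow> 'a fsvec" where "sgn_fsvec v = v /\<^sub>R norm v"

definition dist_fsvec :: "'a fsvec \<Rightarrow> 'a fsvec \<Rightarrow> real" where "dist_fsvec u v = norm (u - v)"

definition uniformity_fsvec :: "('a fsvec \<times> 'a fsvec) filter" where
  "uniformity_fsvec = (INF e\<in>{0<..}. principal {(x, y). dist x y < e})"

definition open_fsvec :: "'a fsvec set \<Rightarrow> bool" where
  "open_fsvec U = (\<forall>x\<in>U. \<forall>\<^sub>F (x', y) in uniformity. x' = x \<longrightarrow> y \<in> U)"

lemma norm_fsvec_eq_sum: "finite S \<Longrightarrow> fsvec_support v \<subseteq> S \<Longrightarrow> norm v = (\<Sum>x\<in>S. \<bar>coord v x\<bar>)"
  unfolding norm_fsvec_def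
  by (rule sum.mono_neutral_left) (auto simp: fsvec_support_def)

instance
proof
  fix u :: "'a fsvec"
  show "(norm u = 0) = (u = 0)"
  proof
    assume "norm u = 0"
    then have "\<forall>x\<in>fsvec_support u. \<bar>coord u x\<bar> = 0"
      unfolding norm_fsvec_def
      by (subst (asm) sum_nonneg_eq_0_iff) (auto simp: fsvec_support_def)
    then show "u = 0" by (intro fsvec_eqI) (auto simp: fsvec_support_def)
  qed (simp add: norm_fsvec_def fsvec_support_def)
next
  fix u v :: "'a fsvec"
  let ?S = "fsvec_support u \<union> fsvec_support v"
  have S: "finite ?S" "fsvec_support u \<subseteq> ?S" "fsvec_support v \<subseteq> ?S" "fsvec_support (u + v) \<subseteq> ?S"
    by (auto simp: fsvec_support_def)
  show "norm (u + v) \<le> norm u + norm v"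
    by (simp add: norm_fsvec_eq_sum[OF S(1)] S sum.distrib[symmetric] sum_mono abs_triangle_ineq)
next
  fix c :: real and u :: "'a fsvec"
  have S: "finite (fsvec_support u)" "fsvec_support (c *\<^sub>R u) \<subseteq> fsvec_support u"
    by (auto simp: fsvec_support_def)
  show "norm (c *\<^sub>R u) = \<bar>c\<bar> * norm u"
    by (simp add: norm_fsvec_eq_sum[OF S] norm_fsvec_eq_sum[OF S(1) order_refl] abs_mult
        sum_distrib_left)
qed (simp_all add: dist_fsvec_def sgn_fsvec_def uniformity_fsvec_def open_fsvec_def)

end

lemma abs_coord_le_norm: "\<bar>coord v x\<bar> \<le> norm v"
proof (cases "x \<in> fsvec_support v")
  case True
  then show ?thesis
    unfolding norm_fsvec_def by (rule member_le_sum) (auto simp: fsvec_support_def)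
qed (simp add: fsvec_support_def)

lemma bounded_linear_coord: "bounded_linear (\<lambda>v. coord v x)"
  by (rule bounded_linear_intro[where K=1]) (auto simp: abs_coord_le_norm)

definition unitv :: "'a \<Rightarrow> 'a fsvec" where
  "unitv a = Abs_fsvec (\<lambda>x. if x = a then 1 else 0)"

lemma coord_unitv [simp]: "coord (unitv a) x = (if x = a then 1 else 0)"
  unfolding unitv_def by (subst Abs_fsvec_inverse) auto

text \<open>A parameter \<open>\<theta>\<close> is identified with \<open>fsvec_of P \<theta>\<close>; coordinate derivatives \<open>pdt\<close> of functions
  of \<open>\<theta>\<close> factoring through it are directional derivatives along \<open>unitv a\<close>.\<close>

definition fsvec_of :: "'a set \<Rightarrow> ('a \<Rightarrow> real) \<Rightarrow> 'a fsvec" where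
  "fsvec_of P f = Abs_fsvec (\<lambda>x. if x \<in> P then f x else 0)"

lemma coord_fsvec_of [simp]: "finite P \<Longrightarrow> coord (fsvec_of P f) x = (if x \<in> P then f x else 0)"
  unfolding fsvec_of_def by (subst Abs_fsvec_inverse) (auto intro: finite_subset[of _ P])

lemma fsvec_of_eq_sum: "finite P \<Longrightarrow> fsvec_of P f = (\<Sum>a\<in>P. f a *\<^sub>R unitv a)"
  by (rule fsvec_eqI) (simp add: if_distrib[of "\<lambda>x. _ * x"] sum.If_cases)

lemma fsvec_of_update:
  "finite P \<Longrightarrow> a \<in> P \<Longrightarrow> fsvec_of P (\<theta>(a := \<theta> a + s)) = fsvec_of P \<theta> + s *\<^sub>R unitv a"
  by (intro fsvec_eqI) auto

lemma linear_sum_unitv: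
  "linear g \<Longrightarrow> finite P \<Longrightarrow> g (\<Sum>a\<in>P. c a *\<^sub>R unitv a) = (\<Sum>a\<in>P. c a * g (unitv a))"
  by (simp add: linear_sum linear_scale)

section \<open>Twice differentiable functions on normed spaces\<close>

definition twice_diff_on :: "'v::real_normed_vector set \<Rightarrow> ('v \<Rightarrow> real) \<Rightarrow> bool" where
  "twice_diff_on U f \<longleftrightarrow> open U \<and> (\<exists>Df D2f. (\<forall>v\<in>U. (f has_derivative Df v) (at v)) \<and>
      (\<forall>v\<in>U. \<forall>w. ((\<lambda>u. Df u w) has_derivative D2f v w) (at v)))"

lemma twice_diff_onI:
  assumes "open U" "\<And>v. v \<in> U \<Longrightarrow> (f has_derivative Df v) (at v)"
    "\<And>v w. v \<in> U \<Longrightarrow> ((\<lambda>u. Df u w) has_derivative D2f v w) (at v)"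
  shows "twice_diff_on U f"
  using assms unfolding twice_diff_on_def by blast

lemma twice_diff_onE:
  assumes "twice_diff_on U f"
  obtains Df D2f where "open U" "\<And>v. v \<in> U \<Longrightarrow> (f has_derivative Df v) (at v)"
    "\<And>v w. v \<in> U \<Longrightarrow> ((\<lambda>u. Df u w) has_derivative D2f v w) (at v)"
  using assms unfolding twice_diff_on_def by blast

lemma twice_diff_on_imp_differentiable: "twice_diff_on U f \<Longrightarrow> v \<in> U \<Longrightarrow> f differentiable (at v)"
  unfolding twice_diff_on_def differentiable_def by blast

lemma twice_diff_on_subset: "twice_diff_on U f \<Longrightarrow> open V \<Longrightarrow> V \<subseteq> U \<Longrightarrow> twice_diff_on V f"
  unfolding twice_diff_on_def by blast

lemma twice_diff_on_cong: "twice_diff_on U f \<Longrightarrow> (\<And>v. v \<in> U \<Longrightarrow> f v = g v) \<Longrightarrow> twice_diff_on U g"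
proof -
  assume "twice_diff_on U f" and eq: "\<And>v. v \<in> U \<Longrightarrow> f v = g v"
  then obtain Df D2f where U: "open U" and f1: "\<And>v. v \<in> U \<Longrightarrow> (f has_derivative Df v) (at v)"
    and f2: "\<And>v w. v \<in> U \<Longrightarrow> ((\<lambda>u. Df u w) has_derivative D2f v w) (at v)"
    by (auto elim!: twice_diff_onE)
  show "twice_diff_on U g"
    by (rule twice_diff_onI[OF U _ f2]) (rule has_derivative_transform_within_open[OF f1 U _ eq])
qed

lemma twice_diff_on_const: "open U \<Longrightarrow> twice_diff_on U (\<lambda>_. c)"
  by (rule twice_diff_onI[where Df="\<lambda>_ _. 0" and D2f="\<lambda>_ _ _. 0"]) auto

lemma twice_diff_on_linear: "open U \<Longrightarrow> bounded_linear g \<Longrightarrow> twice_diff_on U g"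
  by (rule twice_diff_onI[where Df="\<lambda>_. g" and D2f="\<lambda>_ _ _. 0"])
    (auto simp: bounded_linear_imp_has_derivative)

lemma twice_diff_on_add: "twice_diff_on U f \<Longrightarrow> twice_diff_on U g \<Longrightarrow> twice_diff_on U (\<lambda>v. f v + g v)"
proof -
  assume "twice_diff_on U f" "twice_diff_on U g"
  then obtain Df D2f Dg D2g where "open U"
    "\<And>v. v \<in> U \<Longrightarrow> (f has_derivative Df v) (at v)"
    "\<And>v w. v \<in> U \<Longrightarrow> ((\<lambda>u. Df u w) has_derivative D2f v w) (at v)"
    "\<And>v. v \<in> U \<Longrightarrow> (g has_derivative Dg v) (at v)"
    "\<And>v w. v \<in> U \<Longrightarrow> ((\<lambda>u. Dg u w) has_derivative D2g v w) (at v)"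
    by (auto elim!: twice_diff_onE)
  then show ?thesis
    by (intro twice_diff_onI[where Df="\<lambda>v w. Df v w + Dg v w"
          and D2f="\<lambda>v w z. D2f v w z + D2g v w z"])
      (auto intro!: derivative_eq_intros)
qed

lemma twice_diff_on_mult: "twice_diff_on U f \<Longrightarrow> twice_diff_on U g \<Longrightarrow> twice_diff_on U (\<lambda>v. f v * g v)"
proof -
  assume "twice_diff_on U f" "twice_diff_on U g"
  then obtain Df D2f Dg D2g where U: "open U" and
    f1: "\<And>v. v \<in> U \<Longrightarrow> (f has_derivative Df v) (at v)" and
    f2: "\<And>v w. v \<in> U \<Longrightarrow> ((\<lambda>u. Df u w) has_derivative D2f v w) (at v)" and
    g1: "\<And>v. v \<in> U \<Longrightarrow> (g has_derivative Dg v) (at v)" and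
    g2: "\<And>v w. v \<in> U \<Longrightarrow> ((\<lambda>u. Dg u w) has_derivative D2g v w) (at v)"
    by (auto elim!: twice_diff_onE)
  show ?thesis
  proof (rule twice_diff_onI[OF U, where Df="\<lambda>v w. f v * Dg v w + Df v w * g v"
        and D2f="\<lambda>v w z. f v * D2g v w z + Df v z * Dg v w + (Df v w * Dg v z + D2f v w z * g v)"])
    fix v w assume v: "v \<in> U"
    show "((\<lambda>v. f v * g v) has_derivative (\<lambda>w. f v * Dg v w + Df v w * g v)) (at v)"
      using f1[OF v] g1[OF v] by (rule has_derivative_mult)
    show "((\<lambda>u. f u * Dg u w + Df u w * g u) has_derivative
        (\<lambda>z. f v * D2g v w z + Df v z * Dg v w + (Df v w * Dg v z + D2f v w z * g v))) (at v)"
      by (rule has_derivative_add[OF has_derivative_mult[OF f1[OF v] g2[OF v]]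
            has_derivative_mult[OF f2[OF v] g1[OF v]]])
  qed
qed

lemma twice_diff_on_cmult: "twice_diff_on U f \<Longrightarrow> twice_diff_on U (\<lambda>v. c * f v)"
  by (rule twice_diff_on_mult[OF twice_diff_on_const]) (simp_all add: twice_diff_on_def)

lemma twice_diff_on_diff: "twice_diff_on U f \<Longrightarrow> twice_diff_on U g \<Longrightarrow> twice_diff_on U (\<lambda>v. f v - g v)"
  using twice_diff_on_add[of U f "\<lambda>v. (-1) * g v"] twice_diff_on_cmult[of U g "-1"] by simp

lemma twice_diff_on_sum:
  "open U \<Longrightarrow> (\<And>i. i \<in> I \<Longrightarrow> twice_diff_on U (f i)) \<Longrightarrow> twice_diff_on U (\<lambda>v. \<Sum>i\<in>I. f i v)"
  by (induction I rule: infinite_finite_induct) (auto intro: twice_diff_on_const twice_diff_on_add)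

lemma twice_diff_on_compose_real:
  fixes \<phi> :: "real \<Rightarrow> real"
  assumes "twice_diff_on U f"
    and d1: "\<And>v. v \<in> U \<Longrightarrow> (\<phi> has_real_derivative \<phi>' (f v)) (at (f v))"
    and d2: "\<And>v. v \<in> U \<Longrightarrow> (\<phi>' has_real_derivative \<phi>'' (f v)) (at (f v))"
  shows "twice_diff_on U (\<lambda>v. \<phi> (f v))"
proof -
  from assms(1) obtain Df D2f where U: "open U" and
    f1: "\<And>v. v \<in> U \<Longrightarrow> (f has_derivative Df v) (at v)" and
    f2: "\<And>v w. v \<in> U \<Longrightarrow> ((\<lambda>u. Df u w) has_derivative D2f v w) (at v)"
    by (auto elim!: twice_diff_onE)
  show ?thesis
  proof (rule twice_diff_onI[OF U, where Df="\<lambda>v w. Df v w * \<phi>' (f v)"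
        and D2f="\<lambda>v w z. Df v w * (Df v z * \<phi>'' (f v)) + D2f v w z * \<phi>' (f v)"])
    fix v w assume v: "v \<in> U"
    show "((\<lambda>v. \<phi> (f v)) has_derivative (\<lambda>w. Df v w * \<phi>' (f v))) (at v)"
      by (rule DERIV_compose_FDERIV[OF d1[OF v] f1[OF v]])
    show "((\<lambda>u. Df u w * \<phi>' (f u)) has_derivative
        (\<lambda>z. Df v w * (Df v z * \<phi>'' (f v)) + D2f v w z * \<phi>' (f v))) (at v)"
      using has_derivative_mult[OF f2[OF v] DERIV_compose_FDERIV[OF d2[OF v] f1[OF v]]] by simp
  qed
qed

section \<open>Coordinate derivatives\<close>

lemma has_real_derivative_along_line:
  assumes "(g has_derivative g') (at v)"
  shows "((\<lambda>s::real. g (v + s *\<^sub>R e)) has_real_derivative g' e) (at 0)"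
proof -
  have "((\<lambda>s::real. v + s *\<^sub>R e) has_derivative (\<lambda>s. s *\<^sub>R e)) (at 0)"
    by (auto intro!: derivative_eq_intros)
  from has_derivative_compose[OF this] assms
  have "((\<lambda>s::real. g (v + s *\<^sub>R e)) has_derivative (\<lambda>s. g' (s *\<^sub>R e))) (at 0)"
    by simp
  moreover have "(\<lambda>s. g' (s *\<^sub>R e)) = (\<lambda>s. g' e * s)"
    using linear_scale[OF has_derivative_linear[OF assms]] by (simp add: mult.commute)
  ultimately show ?thesis
    unfolding has_field_derivative_def by simp
qed

lemma eventually_nhds_line_in_open:
  fixes v e :: "'v::real_normed_vector"
  assumes "open U" "v \<in> U"
  shows "eventually (\<lambda>s::real. v + s *\<^sub>R e \<in> U) (nhds 0)"
proof -
  have "open ((\<lambda>s::real. v + s *\<^sub>R e) -` U)"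
    by (rule continuous_open_vimage[OF assms(1)]) (intro continuous_intros)
  then show ?thesis
    using assms unfolding eventually_nhds by (intro exI[of _ "(\<lambda>s::real. v + s *\<^sub>R e) -` U"]) auto
qed

lemma pdt_fsvec_derivative:
  assumes P: "finite P" "a \<in> P" and f: "\<And>\<theta>. f \<theta> = ft (fsvec_of P \<theta>)"
    and d: "(ft has_derivative Df) (at (fsvec_of P \<theta>))"
  shows "((\<lambda>s. f (\<theta>(a := \<theta> a + s))) has_real_derivative Df (unitv a)) (at 0)"
    and "pdt f a \<theta> = Df (unitv a)"
proof -
  show *: "((\<lambda>s. f (\<theta>(a := \<theta> a + s))) has_real_derivative Df (unitv a)) (at 0)"
    using has_real_derivative_along_line[OF d, of "unitv a"] by (simp add: f fsvec_of_update[OF P])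
  then show "pdt f a \<theta> = Df (unitv a)"
    unfolding pdt_def by (rule DERIV_imp_deriv)
qed

lemma pdt_pdt_fsvec_derivative:
  assumes P: "finite P" "a \<in> P" "b \<in> P" and f: "\<And>\<theta>. f \<theta> = ft (fsvec_of P \<theta>)"
    and U: "open U" "fsvec_of P \<theta> \<in> U"
    and f1: "\<And>v. v \<in> U \<Longrightarrow> (ft has_derivative Df v) (at v)"
    and f2: "\<And>v w. v \<in> U \<Longrightarrow> ((\<lambda>u. Df u w) has_derivative D2f v w) (at v)"
  shows "((\<lambda>s. pdt f b (\<theta>(a := \<theta> a + s))) has_real_derivative
           D2f (fsvec_of P \<theta>) (unitv b) (unitv a)) (at 0)"
    and "pdt (pdt f b) a \<theta> = D2f (fsvec_of P \<theta>) (unitv b) (unitv a)"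
proof -
  have "eventually (\<lambda>s. pdt f b (\<theta>(a := \<theta> a + s)) = Df (fsvec_of P \<theta> + s *\<^sub>R unitv a) (unitv b))
      (nhds 0)"
    using eventually_nhds_line_in_open[OF U, of "unitv a"]
  proof eventually_elim
    case (elim s)
    from pdt_fsvec_derivative(2)[where f=f and ft=ft and \<theta>="\<theta>(a := \<theta> a + s)", OF P(1,3) f]
      f1[OF elim]
    show ?case by (simp add: fsvec_of_update[OF P(1,2)])
  qed
  from DERIV_cong_ev[OF refl this refl] has_real_derivative_along_line[OF f2[OF U(2)]]
  show *: "((\<lambda>s. pdt f b (\<theta>(a := \<theta> a + s))) has_real_derivative
           D2f (fsvec_of P \<theta>) (unitv b) (unitv a)) (at 0)"
    by simp
  then show "pdt (pdt f b) a \<theta> = D2f (fsvec_of P \<theta>) (unitv b) (unitv a)"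
    unfolding pdt_def[of "pdt f b"] by (rule DERIV_imp_deriv)
qed

lemma pdt_line_has_derivative:
  assumes P: "finite P" "a \<in> P" and f: "\<And>\<theta>. f \<theta> = ft (fsvec_of P \<theta>)"
    and "ft differentiable (at (fsvec_of P \<theta>))"
  shows "((\<lambda>s. f (\<theta>(a := \<theta> a + s))) has_real_derivative pdt f a \<theta>) (at 0)"
proof -
  obtain Df where "(ft has_derivative Df) (at (fsvec_of P \<theta>))"
    using assms(4) unfolding differentiable_def by blast
  from pdt_fsvec_derivative[OF P f this] show ?thesis by simp
qed

lemma pdt_pdt_line_has_derivative:
  assumes P: "finite P" "a \<in> P" "b \<in> P" and f: "\<And>\<theta>. f \<theta> = ft (fsvec_of P \<theta>)"
    and "twice_diff_on U ft" "fsvec_of P \<theta> \<in> U"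
  shows "((\<lambda>s. pdt f b (\<theta>(a := \<theta> a + s))) has_real_derivative pdt (pdt f b) a \<theta>) (at 0)"
proof -
  obtain Df D2f where "open U" "\<And>v. v \<in> U \<Longrightarrow> (ft has_derivative Df v) (at v)"
    "\<And>v w. v \<in> U \<Longrightarrow> ((\<lambda>u. Df u w) has_derivative D2f v w) (at v)"
    using twice_diff_onE[OF assms(5)] by blast
  from pdt_pdt_fsvec_derivative[OF P f this(1) assms(6) this(2,3)] show ?thesis by simp
qed

lemma pdt_linear_comb:
  fixes hh :: "'k \<Rightarrow> (nat \<times> nat \<times> nat \<Rightarrow> real) \<Rightarrow> real"
    and hht :: "'k \<Rightarrow> (nat \<times> nat \<times> nat) fsvec \<Rightarrow> real"
  assumes P: "finite P" "a \<in> P" and A: "finite A"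
    and hh: "\<And>\<alpha> \<theta>. \<alpha> \<in> A \<Longrightarrow> hh \<alpha> \<theta> = hht \<alpha> (fsvec_of P \<theta>)"
    and G: "\<And>\<theta>. G \<theta> = Gt (fsvec_of P \<theta>)"
    and f: "\<And>\<theta>. f \<theta> = (\<Sum>\<alpha>\<in>A. c \<alpha> * hh \<alpha> \<theta>) - G \<theta>"
    and dh: "\<And>\<alpha>. \<alpha> \<in> A \<Longrightarrow> hht \<alpha> differentiable (at (fsvec_of P \<theta>))"
    and dG: "Gt differentiable (at (fsvec_of P \<theta>))"
  shows "pdt f a \<theta> = (\<Sum>\<alpha>\<in>A. c \<alpha> * pdt (hh \<alpha>) a \<theta>) - pdt G a \<theta>"
proof -
  have "((\<lambda>s. (\<Sum>\<alpha>\<in>A. c \<alpha> * hh \<alpha> (\<theta>(a := \<theta> a + s))) - G (\<theta>(a := \<theta> a + s))) has_real_derivative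
      (\<Sum>\<alpha>\<in>A. c \<alpha> * pdt (hh \<alpha>) a \<theta>) - pdt G a \<theta>) (at 0)"
    by (intro DERIV_diff DERIV_sum DERIV_cmult pdt_line_has_derivative[OF P G dG]
        pdt_line_has_derivative[OF P hh dh]) auto
  then show ?thesis
    unfolding pdt_def[of f] f by (rule DERIV_imp_deriv)
qed

lemma pdt_pdt_linear_comb:
  fixes hh :: "'k \<Rightarrow> (nat \<times> nat \<times> nat \<Rightarrow> real) \<Rightarrow> real"
    and hht :: "'k \<Rightarrow> (nat \<times> nat \<times> nat) fsvec \<Rightarrow> real"
  assumes P: "finite P" "a \<in> P" "b \<in> P" and A: "finite A"
    and hh: "\<And>\<alpha> \<theta>. \<alpha> \<in> A \<Longrightarrow> hh \<alpha> \<theta> = hht \<alpha> (fsvec_of P \<theta>)"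
    and G: "\<And>\<theta>. G \<theta> = Gt (fsvec_of P \<theta>)"
    and f: "\<And>\<theta>. f \<theta> = (\<Sum>\<alpha>\<in>A. c \<alpha> * hh \<alpha> \<theta>) - G \<theta>"
    and Ch: "\<And>\<alpha>. \<alpha> \<in> A \<Longrightarrow> twice_diff_on U (hht \<alpha>)"
    and CG: "twice_diff_on U Gt" and U: "fsvec_of P \<theta> \<in> U"
  shows "pdt (pdt f b) a \<theta> = (\<Sum>\<alpha>\<in>A. c \<alpha> * pdt (pdt (hh \<alpha>) b) a \<theta>) - pdt (pdt G b) a \<theta>"
proof -
  have "open U" using CG by (simp add: twice_diff_on_def)
  have ev: "eventually (\<lambda>s. pdt f b (\<theta>(a := \<theta> a + s)) =
      (\<Sum>\<alpha>\<in>A. c \<alpha> * pdt (hh \<alpha>) b (\<theta>(a := \<theta> a + s))) - pdt G b (\<theta>(a := \<theta> a + s))) (nhds 0)"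
    using eventually_nhds_line_in_open[OF \<open>open U\<close> U, of "unitv a"]
  proof eventually_elim
    case (elim s)
    then have "fsvec_of P (\<theta>(a := \<theta> a + s)) \<in> U" by (simp add: fsvec_of_update[OF P(1,2)])
    then show ?case
      by (intro pdt_linear_comb[where hht=hht and Gt=Gt, OF P(1,3) A hh G f]
          twice_diff_on_imp_differentiable[OF Ch] twice_diff_on_imp_differentiable[OF CG])
  qed
  have "((\<lambda>s. (\<Sum>\<alpha>\<in>A. c \<alpha> * pdt (hh \<alpha>) b (\<theta>(a := \<theta> a + s))) - pdt G b (\<theta>(a := \<theta> a + s)))
      has_real_derivative (\<Sum>\<alpha>\<in>A. c \<alpha> * pdt (pdt (hh \<alpha>) b) a \<theta>) - pdt (pdt G b) a \<theta>) (at 0)"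
    by (intro DERIV_diff DERIV_sum DERIV_cmult pdt_pdt_line_has_derivative[OF P G CG U]
        pdt_pdt_line_has_derivative[OF P hh Ch U])
  then have "((\<lambda>s. pdt f b (\<theta>(a := \<theta> a + s))) has_real_derivative
      (\<Sum>\<alpha>\<in>A. c \<alpha> * pdt (pdt (hh \<alpha>) b) a \<theta>) - pdt (pdt G b) a \<theta>) (at 0)"
    using DERIV_cong_ev[OF refl ev refl] by simp
  then show ?thesis
    unfolding pdt_def[of "pdt f b"] by (rule DERIV_imp_deriv)
qed

definition grad :: "(real^'m \<Rightarrow> real) \<Rightarrow> real^'m \<Rightarrow> real^'m" where
  "grad g \<xi> = (\<chi> j. pdx g j \<xi>)"

lemma twice_differentiableD:
  assumes "twice_differentiable g"
  shows "(g has_derivative (\<lambda>v. grad g \<xi> \<bullet> v)) (at \<xi>)" and "grad g differentiable (at \<xi>)"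
proof -
  obtain G where G: "\<And>\<xi>. (g has_derivative (\<lambda>v. G \<xi> \<bullet> v)) (at \<xi>)"
    and "\<And>\<xi>. G differentiable (at \<xi>)"
    using assms unfolding twice_differentiable_def by blast
  moreover have "G = grad g"
  proof
    fix \<xi>
    have "pdx g j \<xi> = G \<xi> $ j" for j
      unfolding pdx_def using has_real_derivative_along_line[OF G, of \<xi> "axis j 1"]
      by (intro DERIV_imp_deriv) (simp add: inner_axis)
    then show "G \<xi> = grad g \<xi>" by (simp add: grad_def vec_eq_iff)
  qed
  ultimately show "(g has_derivative (\<lambda>v. grad g \<xi> \<bullet> v)) (at \<xi>)" "grad g differentiable (at \<xi>)"
    by auto
qed

lemma pdx_has_derivative:
  assumes "(g has_derivative g') (at \<xi>)"
  shows "((\<lambda>s. g (\<xi> + s *\<^sub>R axis j 1)) has_real_derivative pdx g j \<xi>) (at 0)"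
  using has_real_derivative_along_line[OF assms, of "axis j 1"] unfolding pdx_def
  by (metis DERIV_imp_deriv)

section \<open>Change of coordinates\<close>

locale reparam =
  fixes P :: "(nat \<times> nat \<times> nat) set" and \<Theta> :: "real^'m \<Rightarrow> nat \<times> nat \<times> nat \<Rightarrow> real"
  assumes finite_P: "finite P"
    and twice_diff: "\<forall>a\<in>P. twice_differentiable (\<lambda>\<xi>. \<Theta> \<xi> a)"
begin

abbreviation "Jac a j \<xi> \<equiv> pdx (\<lambda>\<xi>. \<Theta> \<xi> a) j \<xi>"

lemma has_derivative_Theta:
  "a \<in> P \<Longrightarrow> ((\<lambda>\<xi>. \<Theta> \<xi> a) has_derivative (\<lambda>w. grad (\<lambda>\<xi>. \<Theta> \<xi> a) \<xi> \<bullet> w)) (at \<xi>)"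
  using twice_diff twice_differentiableD(1) by blast

lemma has_derivative_fsvec_Theta:
  "((\<lambda>\<xi>. fsvec_of P (\<Theta> \<xi>)) has_derivative
    (\<lambda>w. \<Sum>a\<in>P. (grad (\<lambda>\<xi>. \<Theta> \<xi> a) \<xi> \<bullet> w) *\<^sub>R unitv a)) (at \<xi>)"
  unfolding fsvec_of_eq_sum[OF finite_P]
  by (intro has_derivative_sum has_derivative_scaleR_left has_derivative_Theta)

lemma pdx_comp_fsvec:
  assumes f: "\<And>\<theta>. f \<theta> = ft (fsvec_of P \<theta>)"
    and d: "(ft has_derivative Df) (at (fsvec_of P (\<Theta> \<xi>)))"
  shows "pdx (\<lambda>\<xi>. f (\<Theta> \<xi>)) j \<xi> = (\<Sum>a\<in>P. Jac a j \<xi> * Df (unitv a))"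
proof -
  have "((\<lambda>\<xi>. ft (fsvec_of P (\<Theta> \<xi>))) has_derivative
      (\<lambda>w. Df (\<Sum>a\<in>P. (grad (\<lambda>\<xi>. \<Theta> \<xi> a) \<xi> \<bullet> w) *\<^sub>R unitv a))) (at \<xi>)"
    by (rule has_derivative_compose[OF has_derivative_fsvec_Theta d])
  from has_real_derivative_along_line[OF this, of "axis j 1"]
  have "((\<lambda>s. f (\<Theta> (\<xi> + s *\<^sub>R axis j 1))) has_real_derivative
      (\<Sum>a\<in>P. Jac a j \<xi> * Df (unitv a))) (at 0)"
    by (simp add: f linear_sum_unitv[OF has_derivative_linear[OF d] finite_P] inner_axis grad_def)
  then show ?thesis
    unfolding pdx_def by (rule DERIV_imp_deriv)
qed

lemma has_derivative_Jac_line: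
  assumes "a \<in> P"
  shows "((\<lambda>s. Jac a j (\<xi> + s *\<^sub>R axis i 1)) has_real_derivative pdx (\<lambda>\<xi>. Jac a j \<xi>) i \<xi>) (at 0)"
proof -
  obtain G' where "(grad (\<lambda>\<xi>. \<Theta> \<xi> a) has_derivative G') (at \<xi>)"
    using twice_diff assms twice_differentiableD(2) unfolding differentiable_def by blast
  from has_derivative_compose[OF this bounded_linear_imp_has_derivative[OF bounded_linear_vec_nth]]
  have "((\<lambda>\<xi>. Jac a j \<xi>) has_derivative (\<lambda>w. G' w $ j)) (at \<xi>)"
    by (simp add: grad_def)
  then show ?thesis by (rule pdx_has_derivative)
qed

lemma eventually_fsvec_Theta_line_in_open:
  assumes "open U" "fsvec_of P (\<Theta> \<xi>) \<in> U"
  shows "eventually (\<lambda>s. fsvec_of P (\<Theta> (\<xi> + s *\<^sub>R axis i 1)) \<in> U) (nhds 0)"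
proof -
  let ?v = "\<lambda>s::real. fsvec_of P (\<Theta> (\<xi> + s *\<^sub>R axis i 1))"
  have "((\<lambda>s::real. \<xi> + s *\<^sub>R axis i 1) has_derivative (\<lambda>s. s *\<^sub>R axis i 1)) (at s)" for s
    by (auto intro!: derivative_eq_intros)
  from has_derivative_continuous[OF has_derivative_compose[OF this has_derivative_fsvec_Theta]]
  have "open (?v -` U)"
    by (intro continuous_open_vimage[OF assms(1)])
  then show ?thesis
    unfolding eventually_nhds using assms(2) by (intro exI[of _ "?v -` U"]) auto
qed

lemma pdx_pdx_comp_fsvec:
  assumes f: "\<And>\<theta>. f \<theta> = ft (fsvec_of P \<theta>)"
    and U: "open U" "fsvec_of P (\<Theta> \<xi>) \<in> U"
    and f1: "\<And>v. v \<in> U \<Longrightarrow> (ft has_derivative Df v) (at v)"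
    and f2: "\<And>v w. v \<in> U \<Longrightarrow> ((\<lambda>u. Df u w) has_derivative D2f v w) (at v)"
  shows "pdx (pdx (\<lambda>\<xi>. f (\<Theta> \<xi>)) j) i \<xi> =
     (\<Sum>a\<in>P. pdx (\<lambda>\<xi>. Jac a j \<xi>) i \<xi> * Df (fsvec_of P (\<Theta> \<xi>)) (unitv a)
        + Jac a j \<xi> * (\<Sum>b\<in>P. Jac b i \<xi> * D2f (fsvec_of P (\<Theta> \<xi>)) (unitv a) (unitv b)))"
    (is "_ = (\<Sum>a\<in>P. ?D a)")
proof -
  let ?\<xi> = "\<lambda>s::real. \<xi> + s *\<^sub>R axis i 1"
  let ?v = "\<lambda>s. fsvec_of P (\<Theta> (?\<xi> s))"
  have ev:  "eventually (\<lambda>s. pdx (\<lambda>\<xi>. f (\<Theta> \<xi>)) j (?\<xi> s) =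
      (\<Sum>a\<in>P. Jac a j (?\<xi> s) * Df (?v s) (unitv a))) (nhds 0)"
    using eventually_fsvec_Theta_line_in_open[OF U] by eventually_elim (rule pdx_comp_fsvec[OF f f1])
  have dDf: "((\<lambda>s. Df (?v s) (unitv a)) has_real_derivative
       (\<Sum>b\<in>P. Jac b i \<xi> * D2f (fsvec_of P (\<Theta> \<xi>)) (unitv a) (unitv b))) (at 0)" for a
  proof -
    have "((\<lambda>\<xi>. Df (fsvec_of P (\<Theta> \<xi>)) (unitv a)) has_derivative
        (\<lambda>w. D2f (fsvec_of P (\<Theta> \<xi>)) (unitv a)
               (\<Sum>b\<in>P. (grad (\<lambda>\<xi>. \<Theta> \<xi> b) \<xi> \<bullet> w) *\<^sub>R unitv b))) (at \<xi>)"
      by (rule has_derivative_compose[OF has_derivative_fsvec_Theta f2[OF U(2)]])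
    from has_real_derivative_along_line[OF this, of "axis i 1"] show ?thesis
      by (simp add: linear_sum_unitv[OF has_derivative_linear[OF f2[OF U(2)]] finite_P]
          inner_axis grad_def)
  qed
  have "((\<lambda>s. \<Sum>a\<in>P. Jac a j (?\<xi> s) * Df (?v s) (unitv a)) has_real_derivative (\<Sum>a\<in>P. ?D a)) (at 0)"
  proof (rule DERIV_sum)
    fix a assume "a \<in> P"
    from DERIV_mult[OF has_derivative_Jac_line[where j=j and i=i and \<xi>=\<xi>, OF this] dDf[of a]]
    show "((\<lambda>s. Jac a j (?\<xi> s) * Df (?v s) (unitv a)) has_real_derivative ?D a) (at 0)"
      by (simp add: mult.commute)
  qed
  then have "((\<lambda>s. pdx (\<lambda>\<xi>. f (\<Theta> \<xi>)) j (?\<xi> s)) has_real_derivative (\<Sum>a\<in>P. ?D a)) (at 0)"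
    using DERIV_cong_ev[OF refl ev refl] by simp
  then show ?thesis
    unfolding pdx_def[of "pdx _ j"] by (rule DERIV_imp_deriv)
qed

lemma pdx_chain_rule:
  assumes f: "\<And>\<theta>. f \<theta> = ft (fsvec_of P \<theta>)" and "twice_diff_on U ft" and U: "fsvec_of P (\<Theta> \<xi>) \<in> U"
  shows "pdx (\<lambda>\<xi>. f (\<Theta> \<xi>)) j \<xi> = (\<Sum>a\<in>P. Jac a j \<xi> * pdt f a (\<Theta> \<xi>))"
proof -
  obtain Df where f1: "\<And>v. v \<in> U \<Longrightarrow> (ft has_derivative Df v) (at v)"
    using twice_diff_onE[OF \<open>twice_diff_on U ft\<close>] by metis
  have "pdx (\<lambda>\<xi>. f (\<Theta> \<xi>)) j \<xi> = (\<Sum>a\<in>P. Jac a j \<xi> * Df (fsvec_of P (\<Theta> \<xi>)) (unitv a))"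
    by (rule pdx_comp_fsvec[where f=f and ft=ft, OF f f1[OF U]])
  also have "\<dots> = (\<Sum>a\<in>P. Jac a j \<xi> * pdt f a (\<Theta> \<xi>))"
    using pdt_fsvec_derivative(2)[where f=f and ft=ft, OF finite_P _ f f1[OF U]] by simp
  finally show ?thesis .
qed

lemma pdx_pdx_chain_rule:
  assumes f: "\<And>\<theta>. f \<theta> = ft (fsvec_of P \<theta>)" and "twice_diff_on U ft" and U: "fsvec_of P (\<Theta> \<xi>) \<in> U"
  shows "pdx (pdx (\<lambda>\<xi>. f (\<Theta> \<xi>)) j) i \<xi> =
    (\<Sum>a\<in>P. pdx (\<lambda>\<xi>. Jac a j \<xi>) i \<xi> * pdt f a (\<Theta> \<xi>)
       + Jac a j \<xi> * (\<Sum>b\<in>P. Jac b i \<xi> * pdt (pdt f a) b (\<Theta> \<xi>)))"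
proof -
  obtain Df D2f where "open U" and f1: "\<And>v. v \<in> U \<Longrightarrow> (ft has_derivative Df v) (at v)"
    and f2: "\<And>v w. v \<in> U \<Longrightarrow> ((\<lambda>u. Df u w) has_derivative D2f v w) (at v)"
    using twice_diff_onE[OF \<open>twice_diff_on U ft\<close>] by metis
  note d1 = pdt_fsvec_derivative(2)[where f=f and ft=ft, OF finite_P _ f f1[OF U]]
  note d2 = pdt_pdt_fsvec_derivative(2)[where f=f and ft=ft, OF finite_P _ _ f \<open>open U\<close> U f1 f2]
  show ?thesis
    by (simp add: pdx_pdx_comp_fsvec[where f=f and ft=ft, OF f \<open>open U\<close> U f1 f2] d1 d2)
qed

end

section \<open>Smoothness of the network\<close>

lemma finite_param_idx: "finite (param_idx L n)"
proof -
  have "param_idx L n = (SIGMA l:{..<L}. {..<n (Suc l)} \<times> {..n l})"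
    by (auto simp: param_idx_def)
  then show ?thesis by simp
qed

lemma layer_fsvec_of:
  assumes "l \<le> L" "r < n l"
  shows "layer \<sigma> L n x (coord (fsvec_of (param_idx L n) \<theta>)) l r = layer \<sigma> L n x \<theta> l r"
  using assms
proof (induction l arbitrary: r)
  case (Suc l)
  then have "(l, r, c) \<in> param_idx L n" if "c \<le> n l" for c
    using that by (auto simp: param_idx_def)
  with Suc show ?case
    by (auto simp: Let_def finite_param_idx intro!: sum.cong arg_cong2[where f="(+)"]
        arg_cong[where f=\<sigma>])
qed simp

lemma hL_fsvec_of:
  "\<alpha> < n L \<Longrightarrow> hL \<sigma> L n x (coord (fsvec_of (param_idx L n) \<theta>)) \<alpha> = hL \<sigma> L n x \<theta> \<alpha>"
  unfolding hL_def by (rule layer_fsvec_of) auto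

lemma twice_diff_on_layer:
  assumes "C2_real \<sigma>"
  shows "twice_diff_on UNIV (\<lambda>v. layer \<sigma> L n x (coord v) l r)"
proof (induction l arbitrary: r)
  case (Suc l)
  obtain \<sigma>' \<sigma>'' where \<sigma>1: "\<And>z. (\<sigma> has_real_derivative \<sigma>' z) (at z)"
    and \<sigma>2: "\<And>z. (\<sigma>' has_real_derivative \<sigma>'' z) (at z)"
    using assms unfolding C2_real_def by metis
  have "twice_diff_on UNIV
      (\<lambda>v. (\<Sum>c<n l. coord v (l, r, c) * layer \<sigma> L n x (coord v) l c) + coord v (l, r, n l))"
    by (intro twice_diff_on_add twice_diff_on_sum twice_diff_on_mult twice_diff_on_linear
        bounded_linear_coord Suc) auto
  with twice_diff_on_compose_real[OF this \<sigma>1 \<sigma>2] show ?case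
    by (cases "Suc l < L") (simp_all add: Let_def)
qed (simp add: twice_diff_on_const)

section \<open>Exponential families\<close>

lemma power_le_fact_exp:
  assumes "0 \<le> (x::real)"
  shows "x ^ k \<le> fact k * exp (2 * x)"
proof -
  obtain s where s: "\<bar>s\<bar> \<le> \<bar>x\<bar>" "exp x = (\<Sum>m<k. x ^ m / fact m) + exp s / fact k * x ^ k"
    using Maclaurin_exp_le[of x k] by blast
  have "0 \<le> (\<Sum>m<k. x ^ m / fact m)" using assms by (intro sum_nonneg) auto
  then have "exp s / fact k * x ^ k \<le> exp x" using s by simp
  moreover have "exp (- x) / fact k * x ^ k \<le> exp s / fact k * x ^ k"
    using s assms by (intro mult_right_mono divide_right_mono) auto
  ultimately have "exp (- x) / fact k * x ^ k \<le> exp x" by linarith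
  moreover have "exp (2 * x) = exp x * exp x"
    by (simp add: exp_add[symmetric])
  ultimately show ?thesis
    by (simp add: field_simps exp_minus)
qed

lemma power_le_fact_exp_scaled:
  assumes "0 \<le> (x::real)" "0 < r"
  shows "x ^ k \<le> fact k / r ^ k * exp (2 * r * x)"
proof -
  have "(r * x) ^ k \<le> fact k * exp (2 * (r * x))"
    using assms by (intro power_le_fact_exp) auto
  then show ?thesis using assms
    by (simp add: power_mult_distrib field_simps mult.assoc)
qed

lemma abs_exp_taylor1_le: "\<bar>exp x - 1 - x\<bar> \<le> (x::real)\<^sup>2 * exp \<bar>x\<bar>"
proof -
  obtain s where s: "\<bar>s\<bar> \<le> \<bar>x\<bar>" "exp x = (\<Sum>m<2. x ^ m / fact m) + exp s / fact 2 * x ^ 2"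
    using Maclaurin_exp_le[of x 2] by blast
  then have "\<bar>exp x - 1 - x\<bar> = exp s / 2 * x\<^sup>2"
    by (simp add: eval_nat_numeral)
  also have "\<dots> \<le> exp \<bar>x\<bar> * x\<^sup>2"
  proof (rule mult_right_mono)
    have "exp s \<le> exp \<bar>x\<bar>" using s(1) by simp
    then show "exp s / 2 \<le> exp \<bar>x\<bar>" using exp_gt_zero[of s] by linarith
  qed simp
  finally show ?thesis by (simp add: mult.commute)
qed

lemma abs_integral_le_integral:
  fixes f g :: "'a \<Rightarrow> real"
  assumes "integrable M f" "integrable M g" "\<And>x. x \<in> space M \<Longrightarrow> \<bar>f x\<bar> \<le> g x"
  shows "\<bar>\<integral>x. f x \<partial>M\<bar> \<le> (\<integral>x. g x \<partial>M)"
proof -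
  have "\<bar>\<integral>x. f x \<partial>M\<bar> \<le> (\<integral>x. \<bar>f x\<bar> \<partial>M)"
    using integral_norm_bound[of M f] by simp
  also have "\<dots> \<le> (\<integral>x. g x \<partial>M)"
    using assms by (intro integral_mono) auto
  finally show ?thesis .
qed

locale exp_family =
  fixes \<nu> :: "'y measure" and t :: "'y \<Rightarrow> nat \<Rightarrow> real" and m :: nat
  assumes t_meas [measurable]: "\<And>\<alpha>. \<alpha> < m \<Longrightarrow> (\<lambda>y. t y \<alpha>) \<in> borel_measurable \<nu>"
begin

definition tnorm :: "'y \<Rightarrow> real" where "tnorm y = (\<Sum>\<alpha><m. \<bar>t y \<alpha>\<bar>)"

lemma tdot_measurable [measurable]: "(\<lambda>y. tdot t m y h) \<in> borel_measurable \<nu>"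
  unfolding tdot_def by measurable

lemma tnorm_measurable [measurable]: "tnorm \<in> borel_measurable \<nu>"
  unfolding tnorm_def by measurable

lemma tnorm_nonneg: "0 \<le> tnorm y"
  unfolding tnorm_def by (auto intro: sum_nonneg)

lemma abs_t_le_tnorm: "\<alpha> < m \<Longrightarrow> \<bar>t y \<alpha>\<bar> \<le> tnorm y"
  unfolding tnorm_def by (rule member_le_sum) auto

lemma tdot_add: "tdot t m y (coord (u + w)) = tdot t m y (coord u) + tdot t m y (coord w)"
  by (simp add: tdot_def algebra_simps sum.distrib)

lemma tdot_scaleR: "tdot t m y (coord (c *\<^sub>R w)) = c * tdot t m y (coord w)"
  by (simp add: tdot_def algebra_simps sum_distrib_left)

lemma abs_tdot_le: "\<bar>tdot t m y (coord w)\<bar> \<le> tnorm y * norm w"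
proof -
  have "\<bar>tdot t m y (coord w)\<bar> \<le> (\<Sum>\<alpha><m. \<bar>t y \<alpha>\<bar> * \<bar>coord w \<alpha>\<bar>)"
    unfolding tdot_def by (rule order_trans[OF sum_abs]) (simp add: abs_mult)
  also have "\<dots> \<le> (\<Sum>\<alpha><m. \<bar>t y \<alpha>\<bar> * norm w)"
    by (intro sum_mono mult_left_mono abs_coord_le_norm) auto
  finally show ?thesis by (simp add: tnorm_def sum_distrib_right)
qed

lemma tdot_cong: "(\<And>\<alpha>. \<alpha> < m \<Longrightarrow> h \<alpha> = h' \<alpha>) \<Longrightarrow> tdot t m y h = tdot t m y h'"
  unfolding tdot_def by (intro sum.cong) auto

lemma logpart_cong: "(\<And>\<alpha>. \<alpha> < m \<Longrightarrow> h \<alpha> = h' \<alpha>) \<Longrightarrow> logpart \<nu> t m h = logpart \<nu> t m h'"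
  unfolding logpart_def Zpart_def by (simp add: tdot_cong[of h h'])

lemma in_nat_interior_cong:
  "(\<And>\<alpha>. \<alpha> < m \<Longrightarrow> h \<alpha> = h' \<alpha>) \<Longrightarrow> in_nat_interior \<nu> t m h = in_nat_interior \<nu> t m h'"
  unfolding in_nat_interior_def by simp

lemma integrable_exp_tdot:
  "h \<in> nat_param_space \<nu> t m \<Longrightarrow> integrable \<nu> (\<lambda>y. exp (tdot t m y h))"
  by (rule integrableI_bounded) (simp_all add: nat_param_space_def Zpart_def)

lemma Zpart_eq_integral:
  "h \<in> nat_param_space \<nu> t m \<Longrightarrow> Zpart \<nu> t m h = ennreal (\<integral>y. exp (tdot t m y h) \<partial>\<nu>)"
  unfolding Zpart_def by (rule nn_integral_eq_integral[OF integrable_exp_tdot]) auto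

lemma integral_exp_tdot_pos:
  assumes "h \<in> nat_param_space \<nu> t m"
  shows "0 < (\<integral>y. exp (tdot t m y h) \<partial>\<nu>)"
  using assms Zpart_eq_integral[OF assms] by (simp add: nat_param_space_def)

lemma logpart_eq_ln_integral:
  assumes "h \<in> nat_param_space \<nu> t m"
  shows "logpart \<nu> t m h = ln (\<integral>y. exp (tdot t m y h) \<partial>\<nu>)"
  using integral_exp_tdot_pos[OF assms] by (simp add: logpart_def Zpart_eq_integral[OF assms])

text \<open>Shifting \<open>h\<close> by \<open>\<delta>\<close> along the sign pattern of \<open>t y\<close> turns \<open>tdot\<close> into \<open>tdot + \<delta> * tnorm\<close>,
  so the exponential moment of \<open>tnorm\<close> is dominated by \<open>2\<^sup>m\<close> partition integrands at points of
  the natural parameter space.\<close>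

lemma integrable_exp_tdot_tnorm:
  assumes nb: "\<And>h'. (\<forall>\<alpha><m. \<bar>h' \<alpha> - h \<alpha>\<bar> < \<epsilon>) \<Longrightarrow> h' \<in> nat_param_space \<nu> t m"
    and "0 \<le> \<delta>" "\<delta> < \<epsilon>"
  shows "integrable \<nu> (\<lambda>y. exp (tdot t m y h + \<delta> * tnorm y))"
proof (rule Bochner_Integration.integrable_bound)
  define signs where "signs = PiE {..<m} (\<lambda>_. {-1, 1::real})"
  have "finite signs" unfolding signs_def by (intro finite_PiE) auto
  show "integrable \<nu> (\<lambda>y. \<Sum>s\<in>signs. exp (tdot t m y (\<lambda>\<alpha>. h \<alpha> + \<delta> * s \<alpha>)))"
  proof (intro Bochner_Integration.integrable_sum integrable_exp_tdot nb allI impI)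
    fix s \<alpha> assume "s \<in> signs" "\<alpha> < m"
    then have "s \<alpha> \<in> {-1, 1}" unfolding signs_def by auto
    then show "\<bar>h \<alpha> + \<delta> * s \<alpha> - h \<alpha>\<bar> < \<epsilon>" using assms by auto
  qed
  have "exp (tdot t m y h + \<delta> * tnorm y) \<le> (\<Sum>s\<in>signs. exp (tdot t m y (\<lambda>\<alpha>. h \<alpha> + \<delta> * s \<alpha>)))"
    for y
  proof -
    define s0 where "s0 = (\<lambda>\<alpha>\<in>{..<m}. if t y \<alpha> \<ge> 0 then 1 else (-1::real))"
    have "s0 \<in> signs" unfolding signs_def s0_def by auto
    have "tdot t m y (\<lambda>\<alpha>. h \<alpha> + \<delta> * s0 \<alpha>) = tdot t m y h + \<delta> * tnorm y"
      unfolding tdot_def tnorm_def s0_def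
      by (auto simp: algebra_simps sum.distrib sum_distrib_left intro!: sum.cong)
    then show ?thesis
      using member_le_sum[OF \<open>s0 \<in> signs\<close>, of "\<lambda>s. exp (tdot t m y (\<lambda>\<alpha>. h \<alpha> + \<delta> * s \<alpha>))"]
        \<open>finite signs\<close> by simp
  qed
  then show "AE y in \<nu>. norm (exp (tdot t m y h + \<delta> * tnorm y)) \<le>
      norm (\<Sum>s\<in>signs. exp (tdot t m y (\<lambda>\<alpha>. h \<alpha> + \<delta> * s \<alpha>)))"
    by (auto intro!: always_eventually simp: abs_of_nonneg sum_nonneg)
qed simp

lemma in_nat_interiorE:
  assumes "in_nat_interior \<nu> t m h"
  obtains \<delta> where "\<delta> > 0" "integrable \<nu> (\<lambda>y. exp (tdot t m y h + \<delta> * tnorm y))"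
    "h \<in> nat_param_space \<nu> t m"
proof -
  obtain \<epsilon> where "\<epsilon> > 0" and nb: "\<And>h'. (\<forall>\<alpha><m. \<bar>h' \<alpha> - h \<alpha>\<bar> < \<epsilon>) \<Longrightarrow> h' \<in> nat_param_space \<nu> t m"
    using assms unfolding in_nat_interior_def by blast
  moreover have "integrable \<nu> (\<lambda>y. exp (tdot t m y h + \<epsilon>/2 * tnorm y))"
    by (rule integrable_exp_tdot_tnorm[OF nb]) (use \<open>\<epsilon> > 0\<close> in auto)
  moreover have "h \<in> nat_param_space \<nu> t m"
    using nb[of h] \<open>\<epsilon> > 0\<close> by simp
  ultimately show ?thesis
    using that[of "\<epsilon>/2"] by simp
qed

lemma integrable_tnorm_power_exp:
  assumes B: "integrable \<nu> (\<lambda>y. exp (tdot t m y h + \<delta> * tnorm y))" and "\<delta> > 0"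
    and [measurable]: "g \<in> borel_measurable \<nu>" and \<rho>: "0 \<le> \<rho>" "\<rho> \<le> \<delta>/2"
    and b: "\<And>y. \<bar>g y\<bar> \<le> C * tnorm y ^ j * exp (tdot t m y h + \<rho> * tnorm y)"
  shows "integrable \<nu> g"
proof (rule Bochner_Integration.integrable_bound)
  let ?K = "\<bar>C\<bar> * (fact j / (\<delta>/4) ^ j)"
  show "integrable \<nu> (\<lambda>y. ?K * exp (tdot t m y h + \<delta> * tnorm y))"
    using B by simp
  have "\<bar>g y\<bar> \<le> ?K * exp (tdot t m y h + \<delta> * tnorm y)" for y
  proof -
    have "tnorm y ^ j \<le> fact j / (\<delta>/4) ^ j * exp (2 * (\<delta>/4) * tnorm y)"
      using \<open>\<delta> > 0\<close> by (intro power_le_fact_exp_scaled tnorm_nonneg) auto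
    then have "\<bar>C\<bar> * tnorm y ^ j * exp (tdot t m y h + \<rho> * tnorm y)
        \<le> \<bar>C\<bar> * (fact j / (\<delta>/4) ^ j * exp (2 * (\<delta>/4) * tnorm y)) * exp (tdot t m y h + \<rho> * tnorm y)"
      by (intro mult_right_mono mult_left_mono) auto
    also have "\<dots> = ?K * exp (tdot t m y h + (\<rho> + \<delta>/2) * tnorm y)"
      by (simp add: mult_exp_exp[symmetric] algebra_simps)
    also have "\<dots> \<le> ?K * exp (tdot t m y h + \<delta> * tnorm y)"
      using \<rho> tnorm_nonneg[of y] by (intro mult_left_mono) (auto intro!: mult_right_mono)
    moreover have "C * tnorm y ^ j * exp (tdot t m y h + \<rho> * tnorm y)
        \<le> \<bar>C\<bar> * tnorm y ^ j * exp (tdot t m y h + \<rho> * tnorm y)"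
      using tnorm_nonneg[of y] by (intro mult_right_mono) auto
    ultimately show ?thesis
      using b[of y] by linarith
  qed
  from order_trans[OF this abs_ge_self]
  show "AE y in \<nu>. norm (g y) \<le> norm (?K * exp (tdot t m y h + \<delta> * tnorm y))"
    unfolding real_norm_def by (intro always_eventually allI)
qed simp

end

lemma twice_diff_on_familyE:
  assumes "\<And>\<alpha>. \<alpha> \<in> A \<Longrightarrow> twice_diff_on U (H \<alpha>)"
  obtains DH D2H where "\<forall>\<alpha>\<in>A. (\<forall>v\<in>U. (H \<alpha> has_derivative DH \<alpha> v) (at v)) \<and>
      (\<forall>v\<in>U. \<forall>w. ((\<lambda>u. DH \<alpha> u w) has_derivative D2H \<alpha> v w) (at v))"
proof -
  have "\<forall>\<alpha>\<in>A. \<exists>D. (\<forall>v\<in>U. (H \<alpha> has_derivative fst D v) (at v)) \<and>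
      (\<forall>v\<in>U. \<forall>w. ((\<lambda>u. fst D u w) has_derivative snd D v w) (at v))"
  proof
    fix \<alpha> assume "\<alpha> \<in> A"
    with assms obtain Df D2f where "\<forall>v\<in>U. (H \<alpha> has_derivative Df v) (at v)"
      "\<forall>v\<in>U. \<forall>w. ((\<lambda>u. Df u w) has_derivative D2f v w) (at v)"
      unfolding twice_diff_on_def by blast
    then show "\<exists>D. (\<forall>v\<in>U. (H \<alpha> has_derivative fst D v) (at v)) \<and>
        (\<forall>v\<in>U. \<forall>w. ((\<lambda>u. fst D u w) has_derivative snd D v w) (at v))"
      by (intro exI[of _ "(Df, D2f)"]) simp
  qed
  from bchoice[OF this] obtain D where "\<forall>\<alpha>\<in>A. (\<forall>v\<in>U. (H \<alpha> has_derivative fst (D \<alpha>) v) (at v)) \<and>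
      (\<forall>v\<in>U. \<forall>w. ((\<lambda>u. fst (D \<alpha>) u w) has_derivative snd (D \<alpha>) v w) (at v))"
    by blast
  then show ?thesis
    by (rule that[of "\<lambda>\<alpha>. fst (D \<alpha>)" "\<lambda>\<alpha>. snd (D \<alpha>)"])
qed

lemma twice_diff_on_compose_fsvec_of:
  fixes F :: "'b fsvec \<Rightarrow> real" and H :: "'b \<Rightarrow> 'v::real_normed_vector \<Rightarrow> real"
  assumes CF: "twice_diff_on V F" and A: "finite A" and CH: "\<And>\<alpha>. \<alpha> \<in> A \<Longrightarrow> twice_diff_on UNIV (H \<alpha>)"
  shows "twice_diff_on ((\<lambda>v. fsvec_of A (\<lambda>\<alpha>. H \<alpha> v)) -` V) (\<lambda>v. F (fsvec_of A (\<lambda>\<alpha>. H \<alpha> v)))"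
proof -
  define Hv where "Hv v = fsvec_of A (\<lambda>\<alpha>. H \<alpha> v)" for v
  obtain DF D2F where V: "open V" and F1: "\<And>v. v \<in> V \<Longrightarrow> (F has_derivative DF v) (at v)"
    and F2: "\<And>v w. v \<in> V \<Longrightarrow> ((\<lambda>u. DF u w) has_derivative D2F v w) (at v)"
    using CF by (auto elim!: twice_diff_onE)
  obtain DH D2H where DH: "\<forall>\<alpha>\<in>A. (\<forall>v\<in>UNIV. (H \<alpha> has_derivative DH \<alpha> v) (at v)) \<and>
      (\<forall>v\<in>UNIV. \<forall>w. ((\<lambda>u. DH \<alpha> u w) has_derivative D2H \<alpha> v w) (at v))"
    by (rule twice_diff_on_familyE[OF CH])
  define DHv where "DHv v w = (\<Sum>\<alpha>\<in>A. DH \<alpha> v w *\<^sub>R unitv \<alpha>)" for v w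
  have Hvd: "(Hv has_derivative DHv v) (at v)" for v
    unfolding Hv_def fsvec_of_eq_sum[OF A] DHv_def
    using DH by (intro has_derivative_sum has_derivative_scaleR_left) auto
  have "open (Hv -` V)"
    by (rule continuous_open_vimage[OF V has_derivative_continuous[OF Hvd]])
  then show ?thesis
    unfolding Hv_def[symmetric]
  proof (rule twice_diff_onI[where Df="\<lambda>v w. \<Sum>\<alpha>\<in>A. DH \<alpha> v w * DF (Hv v) (unitv \<alpha>)"
        and D2f="\<lambda>v w z. \<Sum>\<alpha>\<in>A. DH \<alpha> v w * D2F (Hv v) (unitv \<alpha>) (DHv v z)
                                 + D2H \<alpha> v w z * DF (Hv v) (unitv \<alpha>)"])
    fix v w assume v: "v \<in> Hv -` V"
    then have "((\<lambda>v. F (Hv v)) has_derivative (\<lambda>w. DF (Hv v) (DHv v w))) (at v)"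
      using has_derivative_compose[OF Hvd F1] by simp
    with v show "((\<lambda>v. F (Hv v)) has_derivative (\<lambda>w. \<Sum>\<alpha>\<in>A. DH \<alpha> v w * DF (Hv v) (unitv \<alpha>)))
        (at v)"
      unfolding DHv_def by (simp add: linear_sum_unitv[OF has_derivative_linear[OF F1] A])
    have "((\<lambda>u. DF (Hv u) (unitv \<alpha>)) has_derivative (\<lambda>z. D2F (Hv v) (unitv \<alpha>) (DHv v z))) (at v)"
      for \<alpha>
      using has_derivative_compose[OF Hvd F2] v by auto
    with DH show "((\<lambda>u. \<Sum>\<alpha>\<in>A. DH \<alpha> u w * DF (Hv u) (unitv \<alpha>)) has_derivative
        (\<lambda>z. \<Sum>\<alpha>\<in>A. DH \<alpha> v w * D2F (Hv v) (unitv \<alpha>) (DHv v z)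
                     + D2H \<alpha> v w z * DF (Hv v) (unitv \<alpha>))) (at v)"
      by (intro has_derivative_sum has_derivative_mult) auto
  qed
qed

lemma has_derivative_quadratic_remainder:
  fixes F :: "'a::real_normed_vector \<Rightarrow> real"
  assumes "bounded_linear L" "0 < r" "0 \<le> K"
    and rem: "\<And>w. norm w < r \<Longrightarrow> \<bar>F (u + w) - F u - L w\<bar> \<le> K * (norm w)\<^sup>2"
  shows "(F has_derivative L) (at u)"
  unfolding has_derivative_at_alt
proof (intro conjI allI impI \<open>bounded_linear L\<close>)
  fix e :: real assume "e > 0"
  show "\<exists>d>0. \<forall>y. norm (y - u) < d \<longrightarrow> norm (F y - F u - L (y - u)) \<le> e * norm (y - u)"
  proof (intro exI[of _ "min r (e / (K + 1))"] conjI allI impI)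
    show "0 < min r (e / (K + 1))" using assms \<open>e > 0\<close> by simp
    fix y assume y: "norm (y - u) < min r (e / (K + 1))"
    have "K * norm (y - u) \<le> K * (e / (K + 1))"
      using y assms by (intro mult_left_mono) auto
    also have "\<dots> \<le> e" using assms \<open>e > 0\<close> by (simp add: field_simps)
    finally have "(K * norm (y - u)) * norm (y - u) \<le> e * norm (y - u)"
      by (rule mult_right_mono) simp
    then show "norm (F y - F u - L (y - u)) \<le> e * norm (y - u)"
      using rem[of "y - u"] y by (simp add: power2_eq_square mult.assoc)
  qed
qed

context exp_family
begin

definition interior_fsvecs :: "nat fsvec set" where
  "interior_fsvecs = {u. in_nat_interior \<nu> t m (coord u)}"

lemma open_interior_fsvecs: "open interior_fsvecs"
  unfolding open_contains_ball
proof
  fix u assume "u \<in> interior_fsvecs"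
  then obtain \<epsilon> where "\<epsilon> > 0"
    and nb: "\<And>h'. (\<forall>\<alpha><m. \<bar>h' \<alpha> - coord u \<alpha>\<bar> < \<epsilon>) \<Longrightarrow> h' \<in> nat_param_space \<nu> t m"
    unfolding interior_fsvecs_def in_nat_interior_def by blast
  have "ball u (\<epsilon>/2) \<subseteq> interior_fsvecs"
  proof
    fix u' assume "u' \<in> ball u (\<epsilon>/2)"
    then have close: "\<bar>coord u' \<alpha> - coord u \<alpha>\<bar> < \<epsilon>/2" for \<alpha>
      using abs_coord_le_norm[of "u' - u" \<alpha>] by (simp add: dist_norm norm_minus_commute)
    have "h' \<in> nat_param_space \<nu> t m" if "\<forall>\<alpha><m. \<bar>h' \<alpha> - coord u' \<alpha>\<bar> < \<epsilon>/2" for h'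
    proof (rule nb, intro allI impI)
      fix \<alpha> assume "\<alpha> < m"
      with that have "\<bar>h' \<alpha> - coord u' \<alpha>\<bar> < \<epsilon>/2" by blast
      with close[of \<alpha>] show "\<bar>h' \<alpha> - coord u \<alpha>\<bar> < \<epsilon>" by linarith
    qed
    with \<open>\<epsilon> > 0\<close> show "u' \<in> interior_fsvecs"
      unfolding interior_fsvecs_def in_nat_interior_def by (intro CollectI exI[of _ "\<epsilon>/2"]) auto
  qed
  with \<open>\<epsilon> > 0\<close> show "\<exists>e>0. ball u e \<subseteq> interior_fsvecs"
    by (intro exI[of _ "\<epsilon>/2"]) auto
qed

context
  fixes q :: "'y \<Rightarrow> real" and u :: "nat fsvec" and \<delta> K :: real and k :: nat
  assumes margin: "integrable \<nu> (\<lambda>y. exp (tdot t m y (coord u) + \<delta> * tnorm y))" "0 < \<delta>"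
    and q_meas [measurable]: "q \<in> borel_measurable \<nu>"
    and K_nonneg: "0 \<le> K" and q_bound: "\<And>y. \<bar>q y\<bar> \<le> K * tnorm y ^ k"
begin

lemma integrable_moment_tdot:
  "integrable \<nu> (\<lambda>y. q y * tdot t m y (coord w) * exp (tdot t m y (coord u)))"
proof (rule integrable_tnorm_power_exp[OF margin, where \<rho>=0 and C="K * norm w" and j="Suc k"])
  fix y
  have "\<bar>q y * tdot t m y (coord w)\<bar> \<le> K * tnorm y ^ k * (tnorm y * norm w)"
    unfolding abs_mult
    using q_bound[of y] abs_tdot_le[of y w] by (intro mult_mono) (auto intro: order_trans)
  then show "\<bar>q y * tdot t m y (coord w) * exp (tdot t m y (coord u))\<bar>
      \<le> K * norm w * tnorm y ^ Suc k * exp (tdot t m y (coord u) + 0 * tnorm y)"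
    by (simp add: abs_mult algebra_simps)
qed (use margin in auto)

lemma integrable_moment_shift:
  assumes "norm w \<le> \<delta>/4"
  shows "integrable \<nu> (\<lambda>y. q y * exp (tdot t m y (coord (u + w))))"
proof (rule integrable_tnorm_power_exp[OF margin, where \<rho>="\<delta>/4" and C=K and j=k])
  fix y
  have "tdot t m y (coord w) \<le> \<delta>/4 * tnorm y"
    using abs_tdot_le[of y w] assms tnorm_nonneg[of y] mult_left_mono[OF assms tnorm_nonneg[of y]]
    by (simp add: mult.commute)
  then have "exp (tdot t m y (coord (u + w))) \<le> exp (tdot t m y (coord u) + \<delta>/4 * tnorm y)"
    by (simp add: tdot_add)
  with q_bound[of y] show "\<bar>q y * exp (tdot t m y (coord (u + w)))\<bar>
      \<le> K * tnorm y ^ k * exp (tdot t m y (coord u) + \<delta>/4 * tnorm y)"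
    unfolding abs_mult by (intro mult_mono) auto
qed (use margin in auto)

lemma bounded_linear_moment:
  "bounded_linear (\<lambda>w. \<integral>y. q y * tdot t m y (coord w) * exp (tdot t m y (coord u)) \<partial>\<nu>)"
proof (rule bounded_linear_intro[where K="\<integral>y. K * tnorm y ^ Suc k * exp (tdot t m y (coord u)) \<partial>\<nu>"])
  show "(\<integral>y. q y * tdot t m y (coord (w1 + w2)) * exp (tdot t m y (coord u)) \<partial>\<nu>) =
    (\<integral>y. q y * tdot t m y (coord w1) * exp (tdot t m y (coord u)) \<partial>\<nu>) +
    (\<integral>y. q y * tdot t m y (coord w2) * exp (tdot t m y (coord u)) \<partial>\<nu>)" for w1 w2
    unfolding tdot_add using integrable_moment_tdot[of w1] integrable_moment_tdot[of w2]
    by (simp add: distrib_left distrib_right)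
  show "(\<integral>y. q y * tdot t m y (coord (c *\<^sub>R w)) * exp (tdot t m y (coord u)) \<partial>\<nu>) =
    c *\<^sub>R (\<integral>y. q y * tdot t m y (coord w) * exp (tdot t m y (coord u)) \<partial>\<nu>)" for c w
    unfolding tdot_scaleR by (simp add: algebra_simps)
  fix w
  have "integrable \<nu> (\<lambda>y. K * tnorm y ^ Suc k * exp (tdot t m y (coord u)))"
    by (rule integrable_tnorm_power_exp[OF margin, where \<rho>=0 and C=K and j="Suc k"])
      (use margin K_nonneg tnorm_nonneg in \<open>auto simp: abs_mult\<close>)
  then have "\<bar>\<integral>y. q y * tdot t m y (coord w) * exp (tdot t m y (coord u)) \<partial>\<nu>\<bar>
      \<le> (\<integral>y. norm w * (K * tnorm y ^ Suc k * exp (tdot t m y (coord u))) \<partial>\<nu>)"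
  proof (intro abs_integral_le_integral integrable_moment_tdot integrable_mult_right)
    fix y
    have "\<bar>q y * tdot t m y (coord w)\<bar> \<le> K * tnorm y ^ k * (tnorm y * norm w)"
      unfolding abs_mult
      using q_bound[of y] abs_tdot_le[of y w] by (intro mult_mono) (auto intro: order_trans)
    then show "\<bar>q y * tdot t m y (coord w) * exp (tdot t m y (coord u))\<bar>
        \<le> norm w * (K * tnorm y ^ Suc k * exp (tdot t m y (coord u)))"
      by (simp add: abs_mult algebra_simps)
  qed
  then show "norm (\<integral>y. q y * tdot t m y (coord w) * exp (tdot t m y (coord u)) \<partial>\<nu>)
      \<le> norm w * (\<integral>y. K * tnorm y ^ Suc k * exp (tdot t m y (coord u)) \<partial>\<nu>)"
    by simp
qed

lemma abs_moment_taylor_integrand_le: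
  assumes w: "norm w < \<delta>/4"
  shows "\<bar>q y * exp (tdot t m y (coord u)) * (exp (tdot t m y (coord w)) - 1 - tdot t m y (coord w))\<bar>
    \<le> (norm w)\<^sup>2 * (K * tnorm y ^ Suc (Suc k) * exp (tdot t m y (coord u) + \<delta>/4 * tnorm y))"
proof -
  let ?x = "tdot t m y (coord w)"
  have ax: "\<bar>?x\<bar> \<le> tnorm y * norm w" by (rule abs_tdot_le)
  then have "\<bar>?x\<bar> \<le> \<delta>/4 * tnorm y"
    using w tnorm_nonneg[of y] mult_left_mono[of "norm w" "\<delta>/4" "tnorm y"] by (simp add: mult.commute)
  then have ex: "exp \<bar>?x\<bar> \<le> exp (\<delta>/4 * tnorm y)" by simp
  have "?x\<^sup>2 \<le> (tnorm y * norm w)\<^sup>2"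
    using ax by (metis abs_ge_zero power2_abs power_mono)
  from this ex have "?x\<^sup>2 * exp \<bar>?x\<bar> \<le> (tnorm y * norm w)\<^sup>2 * exp (\<delta>/4 * tnorm y)"
    by (rule mult_mono) auto
  with abs_exp_taylor1_le[of ?x]
  have "\<bar>exp ?x - 1 - ?x\<bar> \<le> (tnorm y * norm w)\<^sup>2 * exp (\<delta>/4 * tnorm y)"
    by linarith
  moreover have "0 \<le> K * tnorm y ^ k" using q_bound[of y] by linarith
  ultimately have "\<bar>q y\<bar> * exp (tdot t m y (coord u)) * \<bar>exp ?x - 1 - ?x\<bar>
      \<le> (K * tnorm y ^ k) * exp (tdot t m y (coord u)) * ((tnorm y * norm w)\<^sup>2 * exp (\<delta>/4 * tnorm y))"
    using q_bound[of y] by (intro mult_mono) auto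
  also have "\<dots> =
      (norm w)\<^sup>2 * (K * tnorm y ^ Suc (Suc k) * exp (tdot t m y (coord u) + \<delta>/4 * tnorm y))"
    by (simp add: exp_add power2_eq_square algebra_simps)
  finally show ?thesis
    by (simp add: abs_mult)
qed

lemma moment_taylor_remainder:
  assumes w: "norm w < \<delta>/4"
  shows "\<bar>(\<integral>y. q y * exp (tdot t m y (coord (u + w))) \<partial>\<nu>) - (\<integral>y. q y * exp (tdot t m y (coord u)) \<partial>\<nu>)
          - (\<integral>y. q y * tdot t m y (coord w) * exp (tdot t m y (coord u)) \<partial>\<nu>)\<bar>
    \<le> (\<integral>y. K * tnorm y ^ Suc (Suc k) * exp (tdot t m y (coord u) + \<delta>/4 * tnorm y) \<partial>\<nu>) * (norm w)\<^sup>2"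
proof -
  let ?x = "\<lambda>y. tdot t m y (coord w)"
  let ?eu = "\<lambda>y. exp (tdot t m y (coord u))"
  have i0: "integrable \<nu> (\<lambda>y. q y * exp (tdot t m y (coord (u + w))))"
    and i1: "integrable \<nu> (\<lambda>y. q y * exp (tdot t m y (coord (u + 0))))"
    using w margin by (intro integrable_moment_shift; simp)+
  have "(\<integral>y. q y * exp (tdot t m y (coord (u + w))) \<partial>\<nu>) - (\<integral>y. q y * ?eu y \<partial>\<nu>)
          - (\<integral>y. q y * ?x y * ?eu y \<partial>\<nu>)
      = (\<integral>y. q y * exp (tdot t m y (coord (u + w))) - q y * ?eu y - q y * ?x y * ?eu y \<partial>\<nu>)"
    using i0 i1 integrable_moment_tdot[of w] by simp
  also have "\<dots> = (\<integral>y. q y * ?eu y * (exp (?x y) - 1 - ?x y) \<partial>\<nu>)"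
    by (intro Bochner_Integration.integral_cong refl) (simp add: tdot_add exp_add algebra_simps)
  finally have eq: "(\<integral>y. q y * exp (tdot t m y (coord (u + w))) \<partial>\<nu>) - (\<integral>y. q y * ?eu y \<partial>\<nu>)
          - (\<integral>y. q y * ?x y * ?eu y \<partial>\<nu>) = (\<integral>y. q y * ?eu y * (exp (?x y) - 1 - ?x y) \<partial>\<nu>)"
    (is "_ = integral\<^sup>L \<nu> ?R") .
  have "integrable \<nu> ?R"
    using Bochner_Integration.integrable_diff[OF Bochner_Integration.integrable_diff[OF i0 i1]
        integrable_moment_tdot[of w]]
    by (rule Bochner_Integration.integrable_cong[THEN iffD1, rotated 2])
      (auto simp: tdot_add exp_add algebra_simps)
  moreover have
    "integrable \<nu> (\<lambda>y. K * tnorm y ^ Suc (Suc k) * exp (tdot t m y (coord u) + \<delta>/4 * tnorm y))"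
    by (rule integrable_tnorm_power_exp[OF margin, where \<rho>="\<delta>/4" and C=K and j="Suc (Suc k)"])
      (use margin K_nonneg tnorm_nonneg in \<open>auto simp: abs_mult\<close>)
  ultimately have "\<bar>integral\<^sup>L \<nu> ?R\<bar>
      \<le> (\<integral>y. (norm w)\<^sup>2 *
            (K * tnorm y ^ Suc (Suc k) * exp (tdot t m y (coord u) + \<delta>/4 * tnorm y)) \<partial>\<nu>)"
    using abs_moment_taylor_integrand_le[OF w]
    by (intro abs_integral_le_integral integrable_mult_right)
  with eq show ?thesis by (simp add: mult.commute)
qed

end

lemma has_derivative_moment:
  assumes "u \<in> interior_fsvecs" and [measurable]: "q \<in> borel_measurable \<nu>"
    and "0 \<le> K" and "\<And>y. \<bar>q y\<bar> \<le> K * tnorm y ^ k"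
  shows "((\<lambda>u. \<integral>y. q y * exp (tdot t m y (coord u)) \<partial>\<nu>) has_derivative
          (\<lambda>w. \<integral>y. q y * tdot t m y (coord w) * exp (tdot t m y (coord u)) \<partial>\<nu>)) (at u)"
proof -
  obtain \<delta> where margin: "\<delta> > 0" "integrable \<nu> (\<lambda>y. exp (tdot t m y (coord u) + \<delta> * tnorm y))"
    using assms(1) in_nat_interiorE unfolding interior_fsvecs_def by blast
  have "0 \<le> (\<integral>y. K * tnorm y ^ Suc (Suc k) * exp (tdot t m y (coord u) + \<delta>/4 * tnorm y) \<partial>\<nu>)"
    using assms tnorm_nonneg by (intro integral_nonneg_AE) auto
  with margin assms show ?thesis
    by (intro has_derivative_quadratic_remainder[where r="\<delta>/4"
          and K="\<integral>y. K * tnorm y ^ Suc (Suc k) * exp (tdot t m y (coord u) + \<delta>/4 * tnorm y) \<partial>\<nu>"]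
        bounded_linear_moment
        moment_taylor_remainder) auto
qed

definition partition_fun :: "nat fsvec \<Rightarrow> real" where
  "partition_fun u = (\<integral>y. exp (tdot t m y (coord u)) \<partial>\<nu>)"

lemma twice_diff_on_partition_fun: "twice_diff_on interior_fsvecs partition_fun"
proof (rule twice_diff_onI[OF open_interior_fsvecs,
      where Df="\<lambda>u w. \<integral>y. tdot t m y (coord w) * exp (tdot t m y (coord u)) \<partial>\<nu>"
        and D2f="\<lambda>u w w'. \<integral>y. tdot t m y (coord w) * tdot t m y (coord w')
                              * exp (tdot t m y (coord u)) \<partial>\<nu>"])
  fix u w assume u: "u \<in> interior_fsvecs"
  show "(partition_fun has_derivative (\<lambda>w. \<integral>y. tdot t m y (coord w) * exp (tdot t m y (coord u)) \<partial>\<nu>))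
      (at u)"
    using has_derivative_moment[OF u, of "\<lambda>_. 1" 1 0] unfolding partition_fun_def[abs_def] by simp
  show "((\<lambda>u. \<integral>y. tdot t m y (coord w) * exp (tdot t m y (coord u)) \<partial>\<nu>) has_derivative
      (\<lambda>w'. \<integral>y. tdot t m y (coord w) * tdot t m y (coord w') * exp (tdot t m y (coord u)) \<partial>\<nu>)) (at u)"
  proof (rule has_derivative_moment[OF u, where K="norm w" and k=1])
    show "\<bar>tdot t m y (coord w)\<bar> \<le> norm w * tnorm y ^ 1" for y
      using abs_tdot_le[of y w] by (simp add: mult.commute)
  qed simp_all
qed

lemma twice_diff_on_logpart: "twice_diff_on interior_fsvecs (\<lambda>u. logpart \<nu> t m (coord u))"
proof -
  have param: "coord u \<in> nat_param_space \<nu> t m" if "u \<in> interior_fsvecs" for u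
    using that unfolding interior_fsvecs_def by (auto elim: in_nat_interiorE)
  then have pos: "u \<in> interior_fsvecs \<Longrightarrow> 0 < partition_fun u" for u
    unfolding partition_fun_def by (rule integral_exp_tdot_pos)
  have "twice_diff_on interior_fsvecs (\<lambda>u. ln (partition_fun u))"
  proof (rule twice_diff_on_compose_real[OF twice_diff_on_partition_fun, where \<phi>'=inverse
        and \<phi>''="\<lambda>x. - (inverse x ^ Suc (Suc 0))"])
    fix u assume "u \<in> interior_fsvecs"
    with pos have "0 < partition_fun u" .
    then show "(ln has_real_derivative inverse (partition_fun u)) (at (partition_fun u))"
      by (rule DERIV_ln)
    from \<open>0 < partition_fun u\<close>
    show "(inverse has_real_derivative - (inverse (partition_fun u) ^ Suc (Suc 0)))
        (at (partition_fun u))"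
      by (intro DERIV_inverse) simp
  qed
  then show ?thesis
    by (rule twice_diff_on_cong) (simp add: logpart_eq_ln_integral[OF param] partition_fun_def)
qed

end

section \<open>Covariance of sample means\<close>

definition sq_integrable :: "'a measure \<Rightarrow> ('a \<Rightarrow> real) \<Rightarrow> bool" where
  "sq_integrable M f \<longleftrightarrow> f \<in> borel_measurable M \<and> integrable M (\<lambda>x. (f x)\<^sup>2)"

lemma integrable_mult_sq_integrable:
  assumes f: "sq_integrable M f" and g: "sq_integrable M g"
  shows "integrable M (\<lambda>x. f x * g x)"
proof (rule Bochner_Integration.integrable_bound)
  show "integrable M (\<lambda>x. (f x)\<^sup>2 + (g x)\<^sup>2)" using f g by (auto simp: sq_integrable_def)
  show "(\<lambda>x. f x * g x) \<in> borel_measurable M" using f g by (auto simp: sq_integrable_def)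
  have "\<bar>f x * g x\<bar> \<le> (f x)\<^sup>2 + (g x)\<^sup>2" for x
    using sum_squares_bound[of "\<bar>f x\<bar>" "\<bar>g x\<bar>"] abs_ge_zero[of "f x * g x"]
    unfolding abs_mult power2_abs by linarith
  then show "AE x in M. norm (f x * g x) \<le> norm ((f x)\<^sup>2 + (g x)\<^sup>2)"
    by (auto intro!: always_eventually)
qed

lemma (in finite_measure) sq_integrable_imp_integrable: "sq_integrable M f \<Longrightarrow> integrable M f"
  unfolding sq_integrable_def using square_integrable_imp_integrable by blast

lemma sq_integrable_add: "sq_integrable M f \<Longrightarrow> sq_integrable M g \<Longrightarrow> sq_integrable M (\<lambda>x. f x + g x)"
  using integrable_mult_sq_integrable[of M f g]
  unfolding sq_integrable_def power2_sum by (auto simp: mult.assoc)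

lemma sq_integrable_cmult: "sq_integrable M f \<Longrightarrow> sq_integrable M (\<lambda>x. c * f x)"
  unfolding sq_integrable_def by (auto simp: power_mult_distrib)

lemma sq_integrable_sum:
  "(\<And>i. i \<in> I \<Longrightarrow> sq_integrable M (f i)) \<Longrightarrow> sq_integrable M (\<lambda>x. \<Sum>i\<in>I. f i x)"
proof (induction I rule: infinite_finite_induct)
  case (insert i I)
  then show ?case by (simp add: sq_integrable_add)
qed (simp_all add: sq_integrable_def)

context prob_space
begin

lemma cov_eq_expectation:
  assumes "sq_integrable M X" "sq_integrable M Y"
  shows "cov M X Y = expectation (\<lambda>x. X x * Y x) - expectation X * expectation Y"
proof -
  have "integrable M X" "integrable M Y" "integrable M (\<lambda>x. X x * Y x)"
    using assms by (auto intro: sq_integrable_imp_integrable integrable_mult_sq_integrable)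
  then have "cov M X Y = expectation (\<lambda>x. X x * Y x) - expectation Y * expectation X
      - expectation X * expectation Y + expectation X * expectation Y"
    unfolding cov_def by (simp add: algebra_simps prob_space)
  then show ?thesis by simp
qed

lemma cov_add_const:
  assumes "integrable M X" "integrable M Y"
  shows "cov M (\<lambda>x. X x + c) (\<lambda>x. Y x + d) = cov M X Y"
  unfolding cov_def using assms by (simp add: prob_space)

lemma expectation_sum_mult_sum:
  fixes X Y :: "_ \<Rightarrow> _ \<Rightarrow> real"
  assumes "\<And>i j. i \<in> I \<Longrightarrow> j \<in> J \<Longrightarrow> integrable M (\<lambda>x. X i x * Y j x)"
  shows "expectation (\<lambda>x. (\<Sum>i\<in>I. a i * X i x) * (\<Sum>j\<in>J. b j * Y j x))
      = (\<Sum>i\<in>I. \<Sum>j\<in>J. a i * b j * expectation (\<lambda>x. X i x * Y j x))"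
proof -
  have "expectation (\<lambda>x. (\<Sum>i\<in>I. a i * X i x) * (\<Sum>j\<in>J. b j * Y j x))
    = expectation (\<lambda>x. \<Sum>i\<in>I. \<Sum>j\<in>J. a i * b j * (X i x * Y j x))"
    unfolding sum_product by (simp add: ac_simps)
  also have "\<dots> = (\<Sum>i\<in>I. expectation (\<lambda>x. \<Sum>j\<in>J. a i * b j * (X i x * Y j x)))"
    using assms by (intro Bochner_Integration.integral_sum Bochner_Integration.integrable_sum
        integrable_mult_right) auto
  also have "\<dots> = (\<Sum>i\<in>I. \<Sum>j\<in>J. a i * b j * expectation (\<lambda>x. X i x * Y j x))"
    using assms by (intro sum.cong refl) (simp add: Bochner_Integration.integral_sum)
  finally show ?thesis .
qed

lemma cov_sum_sum:
  assumes X: "\<And>i. i \<in> I \<Longrightarrow> sq_integrable M (X i)" and Y: "\<And>j. j \<in> J \<Longrightarrow> sq_integrable M (Y j)"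
  shows "cov M (\<lambda>x. \<Sum>i\<in>I. a i * X i x) (\<lambda>x. \<Sum>j\<in>J. b j * Y j x) =
    (\<Sum>i\<in>I. \<Sum>j\<in>J. a i * b j * cov M (X i) (Y j))"
proof -
  have "sq_integrable M (\<lambda>x. \<Sum>i\<in>I. a i * X i x)" "sq_integrable M (\<lambda>x. \<Sum>j\<in>J. b j * Y j x)"
    by (intro sq_integrable_sum sq_integrable_cmult X Y; assumption)+
  moreover have "integrable M (X i)" if "i \<in> I" for i
    using X[OF that] by (rule sq_integrable_imp_integrable)
  moreover have "integrable M (Y j)" if "j \<in> J" for j
    using Y[OF that] by (rule sq_integrable_imp_integrable)
  moreover have "integrable M (\<lambda>x. X i x * Y j x)" if "i \<in> I" "j \<in> J" for i j
    using X Y that by (blast intro: integrable_mult_sq_integrable)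
  ultimately have "cov M (\<lambda>x. \<Sum>i\<in>I. a i * X i x) (\<lambda>x. \<Sum>j\<in>J. b j * Y j x)
      = (\<Sum>i\<in>I. \<Sum>j\<in>J. a i * b j * expectation (\<lambda>x. X i x * Y j x))
        - (\<Sum>i\<in>I. a i * expectation (X i)) * (\<Sum>j\<in>J. b j * expectation (Y j))"
    by (simp add: cov_eq_expectation expectation_sum_mult_sum Bochner_Integration.integral_sum)
  also have "\<dots> = (\<Sum>i\<in>I. \<Sum>j\<in>J. a i * b j * cov M (X i) (Y j))"
    using X Y by (simp add: cov_eq_expectation sum_product right_diff_distrib sum_subtractf ac_simps)
  finally show ?thesis .
qed

lemma cov_sum2_sum2:
  assumes X: "\<And>a b. a \<in> A \<Longrightarrow> b \<in> B \<Longrightarrow> sq_integrable M (X a b)"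
    and Y: "\<And>c d. c \<in> C \<Longrightarrow> d \<in> D \<Longrightarrow> sq_integrable M (Y c d)"
  shows "cov M (\<lambda>y. \<Sum>a\<in>A. \<Sum>b\<in>B. p a b * X a b y) (\<lambda>y. \<Sum>c\<in>C. \<Sum>d\<in>D. q c d * Y c d y) =
    (\<Sum>a\<in>A. \<Sum>b\<in>B. \<Sum>c\<in>C. \<Sum>d\<in>D. p a b * q c d * cov M (X a b) (Y c d))"
proof -
  have "cov M (\<lambda>y. \<Sum>a\<in>A. \<Sum>b\<in>B. p a b * X a b y) (\<lambda>y. \<Sum>c\<in>C. \<Sum>d\<in>D. q c d * Y c d y)
    = cov M (\<lambda>y. \<Sum>z\<in>A \<times> B. p (fst z) (snd z) * X (fst z) (snd z) y)
        (\<lambda>y. \<Sum>w\<in>C \<times> D. q (fst w) (snd w) * Y (fst w) (snd w) y)"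
    by (simp add: sum.cartesian_product split_def)
  also have "\<dots> = (\<Sum>z\<in>A \<times> B. \<Sum>w\<in>C \<times> D.
      p (fst z) (snd z) * q (fst w) (snd w) * cov M (X (fst z) (snd z)) (Y (fst w) (snd w)))"
    by (rule cov_sum_sum) (use assms in auto)
  also have "\<dots> = (\<Sum>a\<in>A. \<Sum>b\<in>B. \<Sum>c\<in>C. \<Sum>d\<in>D. p a b * q c d * cov M (X a b) (Y c d))"
    unfolding sum.cartesian_product' by simp
  finally show ?thesis .
qed

end

definition sample_mean :: "nat \<Rightarrow> ('y \<Rightarrow> real) \<Rightarrow> (nat \<Rightarrow> 'y) \<Rightarrow> real" where
  "sample_mean N f ys = 1 / real N * (\<Sum>s<N. f (ys s))"

locale iid_sample = prob_space \<mu> for \<mu> :: "'y measure" +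
  fixes N :: nat
  assumes N_pos: "0 < N"
begin

definition sample :: "(nat \<Rightarrow> 'y) measure" where "sample = PiM {..<N} (\<lambda>_. \<mu>)"

lemma prob_space_sample: "prob_space sample"
  unfolding sample_def by (intro prob_space_PiM) (simp add: prob_space_axioms)

lemma measurable_component: "s < N \<Longrightarrow> (\<lambda>x. x s) \<in> measurable sample \<mu>"
  unfolding sample_def by (rule measurable_component_singleton) simp

lemma
  fixes f :: "'y \<Rightarrow> real"
  assumes "s < N" "f \<in> borel_measurable \<mu>"
  shows integrable_component_iff: "integrable sample (\<lambda>x. f (x s)) \<longleftrightarrow> integrable \<mu> f"
    and integral_component: "(\<integral>x. f (x s) \<partial>sample) = (\<integral>y. f y \<partial>\<mu>)"
proof -
  have d: "distr sample \<mu> (\<lambda>x. x s) = \<mu>"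
    unfolding sample_def using assms by (intro distr_PiM_component) (auto simp: prob_space_axioms)
  show "integrable sample (\<lambda>x. f (x s)) \<longleftrightarrow> integrable \<mu> f"
    using integrable_distr_eq[OF measurable_component[OF assms(1)] assms(2)] d by simp
  show "(\<integral>x. f (x s) \<partial>sample) = (\<integral>y. f y \<partial>\<mu>)"
    using integral_distr[OF measurable_component[OF assms(1)] assms(2)] d by simp
qed

lemma sq_integrable_component:
  assumes "s < N" "sq_integrable \<mu> f"
  shows "sq_integrable sample (\<lambda>x. f (x s))"
proof -
  have [measurable]: "f \<in> borel_measurable \<mu>" and "integrable \<mu> (\<lambda>y. (f y)\<^sup>2)"
    using assms(2) by (auto simp: sq_integrable_def)
  moreover have "(\<lambda>x. f (x s)) \<in> borel_measurable sample"
    using measurable_compose[OF measurable_component[OF assms(1)], of f borel] by simp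
  ultimately show ?thesis
    unfolding sq_integrable_def using integrable_component_iff[OF assms(1), of "\<lambda>y. (f y)\<^sup>2"] by simp
qed

lemma sq_integrable_sample_mean: "sq_integrable \<mu> f \<Longrightarrow> sq_integrable sample (sample_mean N f)"
  unfolding sample_mean_def[abs_def] sum_distrib_left
  by (intro sq_integrable_sum sq_integrable_cmult sq_integrable_component) auto

lemma integral_components_indep:
  fixes f g :: "'y \<Rightarrow> real"
  assumes s: "s < N" "s' < N" "s \<noteq> s'" and f: "integrable \<mu> f" and g: "integrable \<mu> g"
  shows "(\<integral>x. f (x s) * g (x s') \<partial>sample) = (\<integral>y. f y \<partial>\<mu>) * (\<integral>y. g y \<partial>\<mu>)"
proof -
  interpret product_sigma_finite "\<lambda>_. \<mu>"
    by (simp add: product_sigma_finite_def prob_space_imp_sigma_finite prob_space_axioms)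
  define F where "F i = (if i = s then f else if i = s' then g else (\<lambda>_. 1))" for i
  have prod_two: "(\<Prod>i<N. G i) = G s * G s'" if "\<And>i. i \<noteq> s \<Longrightarrow> i \<noteq> s' \<Longrightarrow> G i = 1"
    for G :: "nat \<Rightarrow> real"
  proof -
    have "(\<Prod>i<N. G i) = G s * (\<Prod>i\<in>{..<N} - {s}. G i)"
      using s by (subst prod.remove[of _ s]) auto
    also have "(\<Prod>i\<in>{..<N} - {s}. G i) = G s' * (\<Prod>i\<in>{..<N} - {s} - {s'}. G i)"
      using s by (subst prod.remove[of _ s']) auto
    also have "(\<Prod>i\<in>{..<N} - {s} - {s'}. G i) = 1"
      using that by (intro prod.neutral) auto
    finally show ?thesis by simp
  qed
  have "(\<Prod>i<N. F i (x i)) = f (x s) * g (x s')" for x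
    using prod_two[of "\<lambda>i. F i (x i)"] s(3) by (simp add: F_def)
  then have "(\<integral>x. f (x s) * g (x s') \<partial>sample) = (\<integral>x. (\<Prod>i<N. F i (x i)) \<partial>sample)"
    by simp
  also have "\<dots> = (\<Prod>i<N. integral\<^sup>L \<mu> (F i))"
    unfolding sample_def using f g by (intro product_integral_prod) (auto simp: F_def)
  also have "\<dots> = (\<integral>y. f y \<partial>\<mu>) * (\<integral>y. g y \<partial>\<mu>)"
    using prod_two[of "\<lambda>i. integral\<^sup>L \<mu> (F i)"] s(3) by (simp add: F_def prob_space)
  finally show ?thesis .
qed

lemma cov_components:
  assumes u: "sq_integrable \<mu> u" and v: "sq_integrable \<mu> v" and s: "s < N" "s' < N"
  shows "cov sample (\<lambda>x. u (x s)) (\<lambda>x. v (x s')) = (if s = s' then cov \<mu> u v else 0)"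
proof -
  interpret S: prob_space sample by (rule prob_space_sample)
  have um: "u \<in> borel_measurable \<mu>" and vm: "v \<in> borel_measurable \<mu>"
    using u v by (auto simp: sq_integrable_def)
  have "cov sample (\<lambda>x. u (x s)) (\<lambda>x. v (x s')) =
      (\<integral>x. u (x s) * v (x s') \<partial>sample) - (\<integral>x. u (x s) \<partial>sample) * (\<integral>x. v (x s') \<partial>sample)"
    using s by (intro S.cov_eq_expectation sq_integrable_component u v)
  also have "\<dots> = (if s = s' then (\<integral>y. u y * v y \<partial>\<mu>) else (\<integral>y. u y \<partial>\<mu>) * (\<integral>y. v y \<partial>\<mu>))
      - (\<integral>y. u y \<partial>\<mu>) * (\<integral>y. v y \<partial>\<mu>)"
    using s um vm integral_component[of s "\<lambda>y. u y * v y"] integral_component[of s' v]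
      integral_component[of s u] integral_components_indep[OF s _ sq_integrable_imp_integrable[OF u]
      sq_integrable_imp_integrable[OF v]]
    by (cases "s = s'") simp_all
  also have "\<dots> = (if s = s' then cov \<mu> u v else 0)"
    using cov_eq_expectation[OF u v] by simp
  finally show ?thesis .
qed

lemma cov_sample_mean:
  assumes u: "sq_integrable \<mu> u" and v: "sq_integrable \<mu> v"
  shows "cov sample (sample_mean N u) (sample_mean N v) = 1 / real N * cov \<mu> u v"
proof -
  interpret S: prob_space sample by (rule prob_space_sample)
  have "cov sample (sample_mean N u) (sample_mean N v)
      = (\<Sum>s<N. \<Sum>s'<N. 1 / real N * (1 / real N) * cov sample (\<lambda>x. u (x s)) (\<lambda>x. v (x s')))"
    unfolding sample_mean_def[abs_def] sum_distrib_left
    by (rule S.cov_sum_sum) (auto intro: sq_integrable_component u v)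
  also have "\<dots> = (\<Sum>s<N. \<Sum>s'<N. if s = s' then 1 / real N * (1 / real N) * cov \<mu> u v else 0)"
    by (intro sum.cong refl) (simp add: cov_components[OF u v])
  also have "\<dots> = 1 / real N * cov \<mu> u v"
    using N_pos by simp
  finally show ?thesis .
qed

end

context exp_family
begin

definition poly_bounded :: "('y \<Rightarrow> real) \<Rightarrow> bool" where
  "poly_bounded f \<longleftrightarrow> f \<in> borel_measurable \<nu> \<and>
     (\<exists>C k. 0 \<le> C \<and> (\<forall>y. \<bar>f y\<bar> \<le> C * (1 + tnorm y) ^ k))"

lemma poly_bounded_const: "poly_bounded (\<lambda>_. c)"
  unfolding poly_bounded_def by (intro conjI exI[of _ "\<bar>c\<bar>"] exI[of _ 0]) auto

lemma poly_bounded_t: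
  assumes "\<alpha> < m"
  shows "poly_bounded (\<lambda>y. t y \<alpha>)"
proof -
  have "\<bar>t y \<alpha>\<bar> \<le> 1 * (1 + tnorm y) ^ 1" for y
    using abs_t_le_tnorm[OF assms, of y] by simp
  with t_meas[OF assms] show ?thesis
    unfolding poly_bounded_def by (intro conjI exI[of _ 1] exI[of _ 1]) auto
qed

lemma poly_bounded_mult: "poly_bounded f \<Longrightarrow> poly_bounded g \<Longrightarrow> poly_bounded (\<lambda>y. f y * g y)"
proof -
  assume f: "poly_bounded f" and g: "poly_bounded g"
  then obtain C1 k1 C2 k2 where C: "0 \<le> C1" "0 \<le> C2"
    and b1: "\<And>y. \<bar>f y\<bar> \<le> C1 * (1 + tnorm y) ^ k1" and b2: "\<And>y. \<bar>g y\<bar> \<le> C2 * (1 + tnorm y) ^ k2"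
    unfolding poly_bounded_def by blast
  have "\<bar>f y * g y\<bar> \<le> C1 * C2 * (1 + tnorm y) ^ (k1 + k2)" for y
  proof -
    have "\<bar>f y * g y\<bar> \<le> (C1 * (1 + tnorm y) ^ k1) * (C2 * (1 + tnorm y) ^ k2)"
      unfolding abs_mult by (intro mult_mono b1 b2) (use C tnorm_nonneg in auto)
    then show ?thesis by (simp add: power_add algebra_simps)
  qed
  with f g C show ?thesis
    unfolding poly_bounded_def by (intro conjI exI[of _ "C1 * C2"] exI[of _ "k1 + k2"]) auto
qed

lemma poly_bounded_add: "poly_bounded f \<Longrightarrow> poly_bounded g \<Longrightarrow> poly_bounded (\<lambda>y. f y + g y)"
proof -
  assume f: "poly_bounded f" and g: "poly_bounded g"
  then obtain C1 k1 C2 k2 where C: "0 \<le> C1" "0 \<le> C2"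
    and b1: "\<And>y. \<bar>f y\<bar> \<le> C1 * (1 + tnorm y) ^ k1" and b2: "\<And>y. \<bar>g y\<bar> \<le> C2 * (1 + tnorm y) ^ k2"
    unfolding poly_bounded_def by blast
  have "\<bar>f y + g y\<bar> \<le> (C1 + C2) * (1 + tnorm y) ^ (k1 + k2)" for y
  proof -
    have "1 \<le> 1 + tnorm y" using tnorm_nonneg[of y] by simp
    then have "(1 + tnorm y) ^ k1 \<le> (1 + tnorm y) ^ (k1 + k2)"
      "(1 + tnorm y) ^ k2 \<le> (1 + tnorm y) ^ (k1 + k2)"
      by (simp_all add: power_increasing)
    then have "C1 * (1 + tnorm y) ^ k1 + C2 * (1 + tnorm y) ^ k2
        \<le> C1 * (1 + tnorm y) ^ (k1 + k2) + C2 * (1 + tnorm y) ^ (k1 + k2)"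
      using C by (intro add_mono mult_left_mono) auto
    with b1[of y] b2[of y] show ?thesis
      by (simp add: distrib_right)
  qed
  with f g C show ?thesis
    unfolding poly_bounded_def by (intro conjI exI[of _ "C1 + C2"] exI[of _ "k1 + k2"]) auto
qed

lemma poly_bounded_sum: "(\<And>i. i \<in> I \<Longrightarrow> poly_bounded (f i)) \<Longrightarrow> poly_bounded (\<lambda>y. \<Sum>i\<in>I. f i y)"
  by (induction I rule: infinite_finite_induct) (simp_all add: poly_bounded_const poly_bounded_add)

lemma poly_bounded_affine: "poly_bounded (\<lambda>y. (\<Sum>\<alpha><m. p \<alpha> * t y \<alpha>) + c)"
  by (intro poly_bounded_add poly_bounded_sum poly_bounded_mult poly_bounded_const
      poly_bounded_t) auto

context
  fixes h assumes interior: "in_nat_interior \<nu> t m h"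
begin

lemma expfam_dens_eq: "expfam_dens \<nu> t m h y = exp (tdot t m y h) / (\<integral>y. exp (tdot t m y h) \<partial>\<nu>)"
  using interior unfolding expfam_dens_def
  by (auto elim!: in_nat_interiorE simp: logpart_eq_ln_integral integral_exp_tdot_pos exp_diff)

lemma measurable_expfam_dens [measurable]: "expfam_dens \<nu> t m h \<in> borel_measurable \<nu>"
  unfolding expfam_dens_eq[abs_def] by measurable

lemma prob_space_expfam: "prob_space (expfam \<nu> t m h)"
proof
  obtain \<delta> where param: "h \<in> nat_param_space \<nu> t m" using interior by (rule in_nat_interiorE)
  have "emeasure (expfam \<nu> t m h) (space (expfam \<nu> t m h))
      = (\<integral>\<^sup>+ y. ennreal (expfam_dens \<nu> t m h y) \<partial>\<nu>)"
    unfolding expfam_def by (simp add: emeasure_density)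
  also have "\<dots> = ennreal (\<integral>y. exp (tdot t m y h) / (\<integral>y. exp (tdot t m y h) \<partial>\<nu>) \<partial>\<nu>)"
    unfolding expfam_dens_eq using integral_exp_tdot_pos[OF param]
    by (intro nn_integral_eq_integral integrable_divide integrable_exp_tdot param) auto
  also have "\<dots> = 1"
    using integral_exp_tdot_pos[OF param] by simp
  finally show "emeasure (expfam \<nu> t m h) (space (expfam \<nu> t m h)) = 1" .
qed

lemma integrable_expfam_poly_bounded:
  assumes "poly_bounded f"
  shows "integrable (expfam \<nu> t m h) f"
proof -
  obtain C k where "0 \<le> C" and f_bound: "\<And>y. \<bar>f y\<bar> \<le> C * (1 + tnorm y) ^ k"
    and [measurable]: "f \<in> borel_measurable \<nu>"
    using assms unfolding poly_bounded_def by blast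
  obtain \<delta> where "\<delta> > 0" and margin: "integrable \<nu> (\<lambda>y. exp (tdot t m y h + \<delta> * tnorm y))"
    and param: "h \<in> nat_param_space \<nu> t m"
    using interior by (rule in_nat_interiorE)
  define Z where "Z = (\<integral>y. exp (tdot t m y h) \<partial>\<nu>)"
  have "Z > 0" unfolding Z_def by (rule integral_exp_tdot_pos[OF param])
  have "integrable \<nu> (\<lambda>y. expfam_dens \<nu> t m h y * f y)"
  proof (rule integrable_tnorm_power_exp[OF margin \<open>\<delta> > 0\<close>, where \<rho>="\<delta>/2" and j=0
        and C="C * (fact k / (\<delta>/4) ^ k) * exp (\<delta>/2) / Z"])
    fix y
    have "(1 + tnorm y) ^ k \<le> fact k / (\<delta>/4) ^ k * exp (2 * (\<delta>/4) * (1 + tnorm y))"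
      using \<open>\<delta> > 0\<close> tnorm_nonneg[of y] by (intro power_le_fact_exp_scaled) auto
    also have "exp (2 * (\<delta>/4) * (1 + tnorm y)) = exp (\<delta>/2) * exp (\<delta>/2 * tnorm y)"
      by (simp add: exp_add[symmetric] algebra_simps)
    finally have "\<bar>f y\<bar> \<le> C * (fact k / (\<delta>/4) ^ k * (exp (\<delta>/2) * exp (\<delta>/2 * tnorm y)))"
      using f_bound[of y] \<open>0 \<le> C\<close> by (meson mult_left_mono order_trans)
    then have "exp (tdot t m y h) / Z * \<bar>f y\<bar>
        \<le> exp (tdot t m y h) / Z * (C * (fact k / (\<delta>/4) ^ k * (exp (\<delta>/2) * exp (\<delta>/2 * tnorm y))))"
      using \<open>Z > 0\<close> by (intro mult_left_mono) auto
    also have "\<dots> = C * (fact k / (\<delta>/4) ^ k) * exp (\<delta>/2) / Z * tnorm y ^ 0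
        * exp (tdot t m y h + \<delta>/2 * tnorm y)"
      unfolding exp_add by (simp add: ac_simps)
    finally show "\<bar>expfam_dens \<nu> t m h y * f y\<bar>
        \<le> C * (fact k / (\<delta>/4) ^ k) * exp (\<delta>/2) / Z * tnorm y ^ 0 * exp (tdot t m y h + \<delta>/2 * tnorm y)"
      using \<open>Z > 0\<close> by (simp add: expfam_dens_eq Z_def[symmetric] abs_mult)
  qed (use \<open>\<delta> > 0\<close> in \<open>simp_all add: expfam_dens_eq\<close>)
  then show ?thesis
    unfolding expfam_def by (subst integrable_density) (auto simp: expfam_dens_def)
qed

lemma sq_integrable_expfam_poly_bounded: "poly_bounded f \<Longrightarrow> sq_integrable (expfam \<nu> t m h) f"
  unfolding sq_integrable_def power2_eq_square
  using integrable_expfam_poly_bounded[OF poly_bounded_mult, of f f]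
  by (auto simp: poly_bounded_def expfam_def)

end

end

section \<open>Transformation of the estimator covariances\<close>

lemma sum_weighted_swap:
  fixes c :: "'a \<Rightarrow> real"
  shows "(\<Sum>a\<in>A. c a * (\<Sum>\<alpha>\<in>B. T \<alpha> * d \<alpha> a)) = (\<Sum>\<alpha>\<in>B. T \<alpha> * (\<Sum>a\<in>A. c a * d \<alpha> a))"
  unfolding sum_distrib_left by (subst sum.swap) (simp add: ac_simps)

lemma sum_chain_rule_affine:
  fixes T :: "'k \<Rightarrow> real"
  shows "(\<Sum>a\<in>P. H a * ((\<Sum>\<alpha>\<in>A. T \<alpha> * d \<alpha> a) - g a)
            + J a * (\<Sum>b\<in>P. J' b * ((\<Sum>\<alpha>\<in>A. T \<alpha> * dd \<alpha> b a) - gg b a)))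
    = (\<Sum>\<alpha>\<in>A. T \<alpha> * (\<Sum>a\<in>P. H a * d \<alpha> a)) + (\<Sum>\<alpha>\<in>A. T \<alpha> * (\<Sum>a\<in>P. J a * (\<Sum>b\<in>P. J' b * dd \<alpha> b a)))
      - (\<Sum>a\<in>P. H a * g a + J a * (\<Sum>b\<in>P. J' b * gg b a))"
proof -
  have "(\<Sum>b\<in>P. J' b * (\<Sum>\<alpha>\<in>A. T \<alpha> * dd \<alpha> b a)) = (\<Sum>\<alpha>\<in>A. T \<alpha> * (\<Sum>b\<in>P. J' b * dd \<alpha> b a))" for a
    by (rule sum_weighted_swap)
  then have "H a * ((\<Sum>\<alpha>\<in>A. T \<alpha> * d \<alpha> a) - g a)
        + J a * (\<Sum>b\<in>P. J' b * ((\<Sum>\<alpha>\<in>A. T \<alpha> * dd \<alpha> b a) - gg b a))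
      = (H a * (\<Sum>\<alpha>\<in>A. T \<alpha> * d \<alpha> a) + J a * (\<Sum>\<alpha>\<in>A. T \<alpha> * (\<Sum>b\<in>P. J' b * dd \<alpha> b a)))
        - (H a * g a + J a * (\<Sum>b\<in>P. J' b * gg b a))" for a
    by (simp add: right_diff_distrib sum_subtractf algebra_simps)
  then show ?thesis
    by (simp only: sum_subtractf sum.distrib sum_weighted_swap[of H] sum_weighted_swap[of J])
qed

lemma sum_swap3:
  "(\<Sum>\<alpha>\<in>A. \<Sum>\<beta>\<in>B. \<Sum>x\<in>X. f x \<alpha> \<beta>) = (\<Sum>x\<in>X. \<Sum>\<alpha>\<in>A. \<Sum>\<beta>\<in>B. f x \<alpha> \<beta>)"
  by (subst sum.swap) (simp add: sum.swap[of _ B X])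

lemma sum2_mult_sum2_weighted:
  fixes u v :: "_ \<Rightarrow> _ \<Rightarrow> _ \<Rightarrow> real" and F :: "_ \<Rightarrow> _ \<Rightarrow> real"
  shows "(\<Sum>\<alpha>\<in>M. \<Sum>\<beta>\<in>M'. (\<Sum>a\<in>A. \<Sum>b\<in>B. u \<alpha> a b) * (\<Sum>c\<in>C. \<Sum>d\<in>D. v \<beta> c d) * F \<alpha> \<beta>)
    = (\<Sum>a\<in>A. \<Sum>b\<in>B. \<Sum>c\<in>C. \<Sum>d\<in>D. \<Sum>\<alpha>\<in>M. \<Sum>\<beta>\<in>M'. u \<alpha> a b * v \<beta> c d * F \<alpha> \<beta>)"
proof -
  have "(\<Sum>\<alpha>\<in>M. \<Sum>\<beta>\<in>M'. (\<Sum>a\<in>A. \<Sum>b\<in>B. u \<alpha> a b) * (\<Sum>c\<in>C. \<Sum>d\<in>D. v \<beta> c d) * F \<alpha> \<beta>)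
    = (\<Sum>\<alpha>\<in>M. \<Sum>\<beta>\<in>M'. \<Sum>a\<in>A. \<Sum>b\<in>B. \<Sum>c\<in>C. \<Sum>d\<in>D. u \<alpha> a b * v \<beta> c d * F \<alpha> \<beta>)"
    unfolding sum_distrib_right unfolding sum_distrib_left unfolding sum_distrib_right
    by (simp add: ac_simps)
  also have "\<dots> = (\<Sum>a\<in>A. \<Sum>\<alpha>\<in>M. \<Sum>\<beta>\<in>M'. \<Sum>b\<in>B. \<Sum>c\<in>C. \<Sum>d\<in>D. u \<alpha> a b * v \<beta> c d * F \<alpha> \<beta>)"
    by (rule sum_swap3)
  also have "\<dots> = (\<Sum>a\<in>A. \<Sum>b\<in>B. \<Sum>\<alpha>\<in>M. \<Sum>\<beta>\<in>M'. \<Sum>c\<in>C. \<Sum>d\<in>D. u \<alpha> a b * v \<beta> c d * F \<alpha> \<beta>)"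
    by (intro sum.cong refl sum_swap3)
  also have "\<dots> = (\<Sum>a\<in>A. \<Sum>b\<in>B. \<Sum>c\<in>C. \<Sum>\<alpha>\<in>M. \<Sum>\<beta>\<in>M'. \<Sum>d\<in>D. u \<alpha> a b * v \<beta> c d * F \<alpha> \<beta>)"
    by (intro sum.cong refl sum_swap3)
  also have "\<dots> = (\<Sum>a\<in>A. \<Sum>b\<in>B. \<Sum>c\<in>C. \<Sum>d\<in>D. \<Sum>\<alpha>\<in>M. \<Sum>\<beta>\<in>M'. u \<alpha> a b * v \<beta> c d * F \<alpha> \<beta>)"
    by (intro sum.cong refl sum_swap3)
  finally show ?thesis .
qed

lemma fisher_correction_algebra:
  fixes J :: "'p \<Rightarrow> 'i \<Rightarrow> real" and HH :: "'p \<Rightarrow> 'i \<Rightarrow> 'i \<Rightarrow> real"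
    and dh :: "'m \<Rightarrow> 'p \<Rightarrow> real" and ddh :: "'m \<Rightarrow> 'p \<Rightarrow> 'p \<Rightarrow> real" and F :: "'m \<Rightarrow> 'm \<Rightarrow> real"
    and P :: "'p set" and M :: "'m set" and c :: real
  defines "E1 \<equiv> \<lambda>\<alpha> i j. \<Sum>a\<in>P. \<Sum>b\<in>P. J a i * J b j * ddh \<alpha> a b"
    and "E2 \<equiv> \<lambda>\<alpha> i j. \<Sum>a\<in>P. HH a i j * dh \<alpha> a"
  shows "c * (\<Sum>\<alpha>\<in>M. \<Sum>\<beta>\<in>M. (E2 \<alpha> i j + E1 \<alpha> i j) * (E2 \<beta> k l + E1 \<beta> k l) * F \<alpha> \<beta>) =
    (\<Sum>a\<in>P. \<Sum>b\<in>P. \<Sum>c'\<in>P. \<Sum>d\<in>P. J a i * J b j * J c' k * J d l *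
        (c * (\<Sum>\<alpha>\<in>M. \<Sum>\<beta>\<in>M. ddh \<alpha> a b * ddh \<beta> c' d * F \<alpha> \<beta>)))
    + c * (\<Sum>\<alpha>\<in>M. \<Sum>\<beta>\<in>M.
           ((\<Sum>a\<in>P. \<Sum>b\<in>P. \<Sum>c'\<in>P. J a i * J b j * HH c' k l * ddh \<alpha> a b * dh \<beta> c')
          + (\<Sum>a\<in>P. \<Sum>b\<in>P. \<Sum>c'\<in>P. HH a i j * J b k * J c' l * dh \<alpha> a * ddh \<beta> b c')
          + (\<Sum>a\<in>P. \<Sum>b\<in>P. HH a i j * HH b k l * dh \<alpha> a * dh \<beta> b)) * F \<alpha> \<beta>)"
proof -
  have T1: "(\<Sum>a\<in>P. \<Sum>b\<in>P. \<Sum>c'\<in>P. J a i * J b j * HH c' k l * ddh \<alpha> a b * dh \<beta> c')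
      = E1 \<alpha> i j * E2 \<beta> k l" for \<alpha> \<beta>
    unfolding E1_def E2_def unfolding sum_distrib_right unfolding sum_distrib_left
    by (simp add: ac_simps)
  have T2: "(\<Sum>a\<in>P. \<Sum>b\<in>P. \<Sum>c'\<in>P. HH a i j * J b k * J c' l * dh \<alpha> a * ddh \<beta> b c')
      = E2 \<alpha> i j * E1 \<beta> k l" for \<alpha> \<beta>
    unfolding E1_def E2_def unfolding sum_distrib_right unfolding sum_distrib_left
    by (simp add: ac_simps)
  have T3: "(\<Sum>a\<in>P. \<Sum>b\<in>P. HH a i j * HH b k l * dh \<alpha> a * dh \<beta> b) = E2 \<alpha> i j * E2 \<beta> k l"
    for \<alpha> \<beta>
    unfolding E2_def unfolding sum_distrib_right unfolding sum_distrib_left by (simp add: ac_simps)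
  have T0: "c * (\<Sum>\<alpha>\<in>M. \<Sum>\<beta>\<in>M. E1 \<alpha> i j * E1 \<beta> k l * F \<alpha> \<beta>) =
      (\<Sum>a\<in>P. \<Sum>b\<in>P. \<Sum>c'\<in>P. \<Sum>d\<in>P. J a i * J b j * J c' k * J d l *
        (c * (\<Sum>\<alpha>\<in>M. \<Sum>\<beta>\<in>M. ddh \<alpha> a b * ddh \<beta> c' d * F \<alpha> \<beta>)))"
    unfolding E1_def sum2_mult_sum2_weighted by (simp add: sum_distrib_left ac_simps)
  have "c * (\<Sum>\<alpha>\<in>M. \<Sum>\<beta>\<in>M. (E2 \<alpha> i j + E1 \<alpha> i j) * (E2 \<beta> k l + E1 \<beta> k l) * F \<alpha> \<beta>) =
      c * (\<Sum>\<alpha>\<in>M. \<Sum>\<beta>\<in>M. E1 \<alpha> i j * E1 \<beta> k l * F \<alpha> \<beta>) +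
      c * (\<Sum>\<alpha>\<in>M. \<Sum>\<beta>\<in>M.
        (E1 \<alpha> i j * E2 \<beta> k l + E2 \<alpha> i j * E1 \<beta> k l + E2 \<alpha> i j * E2 \<beta> k l) * F \<alpha> \<beta>)"
    by (simp add: sum.distrib algebra_simps)
  then show ?thesis
    unfolding T0 T1 T2 T3 .
qed

locale network_reparam =
  fixes \<sigma> :: "real \<Rightarrow> real" and L :: nat and n :: "nat \<Rightarrow> nat" and x :: "nat \<Rightarrow> real"
    and \<nu> :: "'y measure" and t :: "'y \<Rightarrow> nat \<Rightarrow> real" and N :: nat
    and \<Theta> :: "real^'m \<Rightarrow> nat \<times> nat \<times> nat \<Rightarrow> real" and \<xi>0 :: "real^'m"
  assumes N_pos: "0 < N"
    and sigma_C2: "C2_real \<sigma>"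
    and reparam_C2: "\<forall>a\<in>param_idx L n. twice_differentiable (\<lambda>\<xi>. \<Theta> \<xi> a)"
    and t_measurable: "\<forall>\<alpha><n L. (\<lambda>y. t y \<alpha>) \<in> borel_measurable \<nu>"
    and interior: "in_nat_interior \<nu> t (n L) (hL \<sigma> L n x (\<Theta> \<xi>0))"

sublocale network_reparam \<subseteq> exp_family \<nu> t "n L"
  using t_measurable by unfold_locales auto

sublocale network_reparam \<subseteq> reparam "param_idx L n" \<Theta>
  using reparam_C2 by unfold_locales (simp_all add: finite_param_idx)

context network_reparam
begin

text \<open>In the notation of the paper: \<open>dnet \<alpha> a = \<partial>\<^sub>a h\<^sub>L\<^sup>\<alpha>\<close>, \<open>d2net \<alpha> a b = \<partial>\<^sub>a\<partial>\<^sub>b h\<^sub>L\<^sup>\<alpha>\<close>,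
  \<open>dTheta a i = \<partial>\<theta>\<^sub>a/\<partial>\<xi>\<^sub>i\<close> and \<open>d2Theta a i j = \<partial>\<^sup>2\<theta>\<^sub>a/\<partial>\<xi>\<^sub>i\<partial>\<xi>\<^sub>j\<close>, all at \<open>\<xi>0\<close>.\<close>

abbreviation "P \<equiv> param_idx L n"
abbreviation "\<theta>0 \<equiv> \<Theta> \<xi>0"
abbreviation "lognorm \<theta> \<equiv> logpart \<nu> t (n L) (hL \<sigma> L n x \<theta>)"
abbreviation "loglik_at y \<theta> \<equiv> loglik \<sigma> L n x \<nu> t \<theta> y"
abbreviation "dnet \<alpha> a \<equiv> pdt (\<lambda>\<theta>. hL \<sigma> L n x \<theta> \<alpha>) a \<theta>0"
abbreviation "d2net \<alpha> a b \<equiv> pdt (pdt (\<lambda>\<theta>. hL \<sigma> L n x \<theta> \<alpha>) b) a \<theta>0"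
abbreviation "dTheta a i \<equiv> pdx (\<lambda>\<xi>. \<Theta> \<xi> a) i \<xi>0"
abbreviation "d2Theta a i j \<equiv> pdx (pdx (\<lambda>\<xi>. \<Theta> \<xi> a) j) i \<xi>0"

definition net_fsvec :: "(nat \<times> nat \<times> nat) fsvec \<Rightarrow> nat \<Rightarrow> real" where
  "net_fsvec v \<alpha> = hL \<sigma> L n x (coord v) \<alpha>"

definition lognorm_fsvec :: "(nat \<times> nat \<times> nat) fsvec \<Rightarrow> real" where
  "lognorm_fsvec v = logpart \<nu> t (n L) (coord (fsvec_of {..<n L} (net_fsvec v)))"

definition smooth_region :: "(nat \<times> nat \<times> nat) fsvec set" where
  "smooth_region = (\<lambda>v. fsvec_of {..<n L} (net_fsvec v)) -` interior_fsvecs"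

lemma twice_diff_on_net_fsvec: "twice_diff_on UNIV (\<lambda>v. net_fsvec v \<alpha>)"
  unfolding net_fsvec_def hL_def by (rule twice_diff_on_layer[OF sigma_C2])

lemma hL_eq_net_fsvec: "\<alpha> < n L \<Longrightarrow> hL \<sigma> L n x \<theta> \<alpha> = net_fsvec (fsvec_of P \<theta>) \<alpha>"
  by (simp add: net_fsvec_def hL_fsvec_of)

lemma lognorm_eq: "lognorm \<theta> = lognorm_fsvec (fsvec_of P \<theta>)"
  unfolding lognorm_fsvec_def by (rule logpart_cong) (simp add: hL_eq_net_fsvec)

lemma twice_diff_on_lognorm_fsvec: "twice_diff_on smooth_region lognorm_fsvec"
  unfolding smooth_region_def lognorm_fsvec_def[abs_def]
  by (rule twice_diff_on_compose_fsvec_of[OF twice_diff_on_logpart finite_lessThan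
        twice_diff_on_net_fsvec])

lemma open_smooth_region: "open smooth_region"
  using twice_diff_on_lognorm_fsvec by (simp add: twice_diff_on_def)

lemma twice_diff_on_net_fsvec_smooth_region: "twice_diff_on smooth_region (\<lambda>v. net_fsvec v \<alpha>)"
  by (rule twice_diff_on_subset[OF twice_diff_on_net_fsvec open_smooth_region]) simp

lemma theta0_in_smooth_region: "fsvec_of P \<theta>0 \<in> smooth_region"
proof -
  have "in_nat_interior \<nu> t (n L) (coord (fsvec_of {..<n L} (net_fsvec (fsvec_of P \<theta>0))))"
    using interior by (subst in_nat_interior_cong) (auto simp: hL_eq_net_fsvec)
  then show ?thesis
    unfolding smooth_region_def interior_fsvecs_def by simp
qed

lemma loglik_eq: "loglik_at y \<theta> = (\<Sum>\<alpha><n L. t y \<alpha> * hL \<sigma> L n x \<theta> \<alpha>) - lognorm \<theta>"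
  unfolding loglik_def expfam_dens_def tdot_def by simp

lemma loglik_eq_fsvec:
  "loglik_at y \<theta> = (\<Sum>\<alpha><n L. t y \<alpha> * net_fsvec (fsvec_of P \<theta>) \<alpha>) - lognorm_fsvec (fsvec_of P \<theta>)"
  unfolding loglik_eq lognorm_eq by (simp add: hL_eq_net_fsvec)

lemma twice_diff_on_loglik_fsvec:
  "twice_diff_on smooth_region (\<lambda>v. (\<Sum>\<alpha><n L. t y \<alpha> * net_fsvec v \<alpha>) - lognorm_fsvec v)"
  by (intro twice_diff_on_diff twice_diff_on_sum twice_diff_on_cmult twice_diff_on_lognorm_fsvec
      twice_diff_on_net_fsvec_smooth_region open_smooth_region)

lemma score_theta:
  "a \<in> P \<Longrightarrow> pdt (loglik_at y) a \<theta>0 = (\<Sum>\<alpha><n L. t y \<alpha> * dnet \<alpha> a) - pdt lognorm a \<theta>0"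
  using twice_diff_on_imp_differentiable[OF twice_diff_on_net_fsvec] theta0_in_smooth_region
    twice_diff_on_imp_differentiable[OF twice_diff_on_lognorm_fsvec]
  by (intro pdt_linear_comb[where hh="\<lambda>\<alpha> \<theta>. hL \<sigma> L n x \<theta> \<alpha>" and hht="\<lambda>\<alpha> v. net_fsvec v \<alpha>"
        and Gt=lognorm_fsvec, OF finite_param_idx _ finite_lessThan hL_eq_net_fsvec lognorm_eq
        loglik_eq])
    auto

lemma hessian_theta:
  "a \<in> P \<Longrightarrow> b \<in> P \<Longrightarrow>
    pdt (pdt (loglik_at y) b) a \<theta>0 = (\<Sum>\<alpha><n L. t y \<alpha> * d2net \<alpha> a b) - pdt (pdt lognorm b) a \<theta>0"
  by (rule pdt_pdt_linear_comb[where hh="\<lambda>\<alpha> \<theta>. hL \<sigma> L n x \<theta> \<alpha>" and hht="\<lambda>\<alpha> v. net_fsvec v \<alpha>"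
        and Gt=lognorm_fsvec and U=smooth_region, OF finite_param_idx _ _ finite_lessThan
        hL_eq_net_fsvec lognorm_eq loglik_eq twice_diff_on_net_fsvec_smooth_region
        twice_diff_on_lognorm_fsvec theta0_in_smooth_region])
    auto

lemma score_xi: "pdx (\<lambda>\<xi>. loglik_at y (\<Theta> \<xi>)) j \<xi>0 = (\<Sum>a\<in>P. dTheta a j * pdt (loglik_at y) a \<theta>0)"
  by (rule pdx_chain_rule[OF loglik_eq_fsvec twice_diff_on_loglik_fsvec theta0_in_smooth_region])

lemma hessian_xi:
  "pdx (pdx (\<lambda>\<xi>. loglik_at y (\<Theta> \<xi>)) j) i \<xi>0 =
    (\<Sum>a\<in>P. d2Theta a i j * pdt (loglik_at y) a \<theta>0
       + dTheta a j * (\<Sum>b\<in>P. dTheta b i * pdt (pdt (loglik_at y) a) b \<theta>0))"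
  by (rule pdx_pdx_chain_rule[OF loglik_eq_fsvec twice_diff_on_loglik_fsvec theta0_in_smooth_region])

end

sublocale network_reparam \<subseteq> iid: iid_sample "expfam \<nu> t (n L) (hL \<sigma> L n x (\<Theta> \<xi>0))" N
  using prob_space_expfam[OF interior] N_pos by (intro iid_sample.intro iid_sample_axioms.intro)

context network_reparam
begin

abbreviation "\<mu> \<equiv> expfam \<nu> t (n L) (hL \<sigma> L n x \<theta>0)"
abbreviation "fisher \<equiv> fisher_h \<nu> t (n L) (hL \<sigma> L n x \<theta>0)"

lemma sample_space_eq: "sample_space \<sigma> L n x \<nu> t N \<theta>0 = iid.sample"
  by (simp add: sample_space_def iid.sample_def)

lemma sq_integrable_poly_bounded: "poly_bounded f \<Longrightarrow> sq_integrable \<mu> f"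
  by (rule sq_integrable_expfam_poly_bounded[OF interior])

lemma poly_bounded_score: "a \<in> P \<Longrightarrow> poly_bounded (\<lambda>y. pdt (loglik_at y) a \<theta>0)"
  using poly_bounded_affine[of "\<lambda>\<alpha>. dnet \<alpha> a" "- pdt lognorm a \<theta>0"]
  by (simp add: score_theta mult.commute)

lemma I1_theta_eq: "I1_theta \<sigma> L n x \<nu> t N \<theta>0 a b =
    sample_mean N (\<lambda>y. pdt (loglik_at y) a \<theta>0 * pdt (loglik_at y) b \<theta>0)"
  by (simp add: I1_theta_def sample_mean_def fun_eq_iff)

lemma I1_xi_eq: "I1_xi \<sigma> L n x \<nu> t N \<Theta> \<xi>0 i j =
    (\<lambda>ys. \<Sum>a\<in>P. \<Sum>b\<in>P. (dTheta a i * dTheta b j) * I1_theta \<sigma> L n x \<nu> t N \<theta>0 a b ys)"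
  unfolding I1_xi_def I1_theta_def score_xi sum_product
  by (simp add: sum_distrib_left ac_simps fun_eq_iff sum.swap[of _ P "{..<N}"])

lemma cov_I1_xi:
  "cov iid.sample (I1_xi \<sigma> L n x \<nu> t N \<Theta> \<xi>0 i j) (I1_xi \<sigma> L n x \<nu> t N \<Theta> \<xi>0 k l) =
    (\<Sum>a\<in>P. \<Sum>b\<in>P. \<Sum>c\<in>P. \<Sum>d\<in>P. dTheta a i * dTheta b j * dTheta c k * dTheta d l *
       cov iid.sample (I1_theta \<sigma> L n x \<nu> t N \<theta>0 a b) (I1_theta \<sigma> L n x \<nu> t N \<theta>0 c d))"
proof -
  have "sq_integrable iid.sample (I1_theta \<sigma> L n x \<nu> t N \<theta>0 a b)" if "a \<in> P" "b \<in> P" for a b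
    unfolding I1_theta_eq using that
    by (intro iid.sq_integrable_sample_mean sq_integrable_poly_bounded poly_bounded_mult
        poly_bounded_score)
  then show ?thesis
    unfolding I1_xi_eq
    by (subst prob_space.cov_sum2_sum2[OF iid.prob_space_sample]) (simp_all add: ac_simps)
qed

definition Jdd :: "nat \<Rightarrow> 'm \<Rightarrow> 'm \<Rightarrow> real" where
  "Jdd \<alpha> i j = (\<Sum>a\<in>P. \<Sum>b\<in>P. dTheta a i * dTheta b j * d2net \<alpha> a b)"

definition Hd :: "nat \<Rightarrow> 'm \<Rightarrow> 'm \<Rightarrow> real" where
  "Hd \<alpha> i j = (\<Sum>a\<in>P. d2Theta a i j * dnet \<alpha> a)"

definition hessian_xi_offset :: "'m \<Rightarrow> 'm \<Rightarrow> real" where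
  "hessian_xi_offset i j =
    (\<Sum>a\<in>P. d2Theta a i j * pdt lognorm a \<theta>0
       + dTheta a j * (\<Sum>b\<in>P. dTheta b i * pdt (pdt lognorm a) b \<theta>0))"

lemma neg_hessian_xi_affine:
  "- pdx (pdx (\<lambda>\<xi>. loglik_at y (\<Theta> \<xi>)) j) i \<xi>0 =
    (\<Sum>\<alpha><n L. (- (Hd \<alpha> i j + Jdd \<alpha> i j)) * t y \<alpha>) + hessian_xi_offset i j"
proof -
  have Jdd_swap: "(\<Sum>a\<in>P. dTheta a j * (\<Sum>b\<in>P. dTheta b i * d2net \<alpha> b a)) = Jdd \<alpha> i j" for \<alpha>
    unfolding Jdd_def sum_distrib_left by (subst sum.swap) (simp add: ac_simps)
  have "pdx (pdx (\<lambda>\<xi>. loglik_at y (\<Theta> \<xi>)) j) i \<xi>0 =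
    (\<Sum>a\<in>P. d2Theta a i j * ((\<Sum>\<alpha><n L. t y \<alpha> * dnet \<alpha> a) - pdt lognorm a \<theta>0)
       + dTheta a j * (\<Sum>b\<in>P. dTheta b i *
           ((\<Sum>\<alpha><n L. t y \<alpha> * d2net \<alpha> b a) - pdt (pdt lognorm a) b \<theta>0)))"
    unfolding hessian_xi by (intro sum.cong refl) (simp add: score_theta hessian_theta)
  also have "\<dots> = (\<Sum>\<alpha><n L. t y \<alpha> * Hd \<alpha> i j) + (\<Sum>\<alpha><n L. t y \<alpha> * Jdd \<alpha> i j) - hessian_xi_offset i j"
    unfolding sum_chain_rule_affine Jdd_swap Hd_def hessian_xi_offset_def ..
  moreover have "(\<Sum>\<alpha><n L. (- (Hd \<alpha> i j + Jdd \<alpha> i j)) * t y \<alpha>)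
      = - ((\<Sum>\<alpha><n L. t y \<alpha> * Hd \<alpha> i j) + (\<Sum>\<alpha><n L. t y \<alpha> * Jdd \<alpha> i j))"
    by (simp add: sum.distrib[symmetric] sum_negf[symmetric] algebra_simps)
  ultimately show ?thesis by simp
qed

lemma I2_xi_eq: "I2_xi \<sigma> L n x \<nu> t N \<Theta> \<xi>0 i j =
    sample_mean N (\<lambda>y. (\<Sum>\<alpha><n L. (- (Hd \<alpha> i j + Jdd \<alpha> i j)) * t y \<alpha>) + hessian_xi_offset i j)"
  unfolding I2_xi_def sample_mean_def neg_hessian_xi_affine[symmetric] by simp

lemma I2_theta_eq: "a \<in> P \<Longrightarrow> b \<in> P \<Longrightarrow> I2_theta \<sigma> L n x \<nu> t N \<theta>0 a b =
    sample_mean N (\<lambda>y. (\<Sum>\<alpha><n L. (- d2net \<alpha> a b) * t y \<alpha>) + pdt (pdt lognorm b) a \<theta>0)"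
  unfolding I2_theta_def sample_mean_def[abs_def] hessian_theta
  by (simp add: sum_negf mult.commute)

lemma cov_sample_mean_affine:
  "cov iid.sample (sample_mean N (\<lambda>y. (\<Sum>\<alpha><n L. p \<alpha> * t y \<alpha>) + c))
      (sample_mean N (\<lambda>y. (\<Sum>\<beta><n L. q \<beta> * t y \<beta>) + d))
   = 1 / real N * (\<Sum>\<alpha><n L. \<Sum>\<beta><n L. p \<alpha> * q \<beta> * fisher \<alpha> \<beta>)"
proof -
  have t_sq: "sq_integrable \<mu> (\<lambda>y. t y \<alpha>)" if "\<alpha> < n L" for \<alpha>
    by (rule sq_integrable_poly_bounded[OF poly_bounded_t[OF that]])
  have "cov \<mu> (\<lambda>y. (\<Sum>\<alpha><n L. p \<alpha> * t y \<alpha>) + c) (\<lambda>y. (\<Sum>\<beta><n L. q \<beta> * t y \<beta>) + d)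
      = cov \<mu> (\<lambda>y. \<Sum>\<alpha><n L. p \<alpha> * t y \<alpha>) (\<lambda>y. \<Sum>\<beta><n L. q \<beta> * t y \<beta>)"
    using t_sq by (intro iid.cov_add_const iid.sq_integrable_imp_integrable sq_integrable_sum
        sq_integrable_cmult) auto
  also have "\<dots> = (\<Sum>\<alpha><n L. \<Sum>\<beta><n L. p \<alpha> * q \<beta> * fisher \<alpha> \<beta>)"
    using t_sq by (subst iid.cov_sum_sum) (auto simp: fisher_h_def)
  finally show ?thesis
    using t_sq by (simp add: iid.cov_sample_mean sq_integrable_poly_bounded poly_bounded_affine)
qed

lemma cov_I2_xi:
  "cov iid.sample (I2_xi \<sigma> L n x \<nu> t N \<Theta> \<xi>0 i j) (I2_xi \<sigma> L n x \<nu> t N \<Theta> \<xi>0 k l) =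
    (\<Sum>a\<in>P. \<Sum>b\<in>P. \<Sum>c\<in>P. \<Sum>d\<in>P. dTheta a i * dTheta b j * dTheta c k * dTheta d l *
       cov iid.sample (I2_theta \<sigma> L n x \<nu> t N \<theta>0 a b) (I2_theta \<sigma> L n x \<nu> t N \<theta>0 c d))
    + 1 / real N * (\<Sum>\<alpha><n L. \<Sum>\<beta><n L.
        ((\<Sum>a\<in>P. \<Sum>b\<in>P. \<Sum>c\<in>P. dTheta a i * dTheta b j * d2Theta c k l * d2net \<alpha> a b * dnet \<beta> c)
       + (\<Sum>a\<in>P. \<Sum>b\<in>P. \<Sum>c\<in>P. d2Theta a i j * dTheta b k * dTheta c l * dnet \<alpha> a * d2net \<beta> b c)
       + (\<Sum>a\<in>P. \<Sum>b\<in>P. d2Theta a i j * d2Theta b k l * dnet \<alpha> a * dnet \<beta> b)) * fisher \<alpha> \<beta>)"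
proof -
  have cov_theta: "cov iid.sample (I2_theta \<sigma> L n x \<nu> t N \<theta>0 a b) (I2_theta \<sigma> L n x \<nu> t N \<theta>0 c d)
      = 1 / real N * (\<Sum>\<alpha><n L. \<Sum>\<beta><n L. d2net \<alpha> a b * d2net \<beta> c d * fisher \<alpha> \<beta>)"
    if "a \<in> P" "b \<in> P" "c \<in> P" "d \<in> P" for a b c d
    unfolding I2_theta_eq[OF that(1,2)] I2_theta_eq[OF that(3,4)] cov_sample_mean_affine by simp
  have "cov iid.sample (I2_xi \<sigma> L n x \<nu> t N \<Theta> \<xi>0 i j) (I2_xi \<sigma> L n x \<nu> t N \<Theta> \<xi>0 k l)
      = 1 / real N * (\<Sum>\<alpha><n L. \<Sum>\<beta><n L. (Hd \<alpha> i j + Jdd \<alpha> i j) * (Hd \<beta> k l + Jdd \<beta> k l) * fisher \<alpha> \<beta>)"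
    unfolding I2_xi_eq cov_sample_mean_affine minus_mult_minus ..
  also have "\<dots> = (\<Sum>a\<in>P. \<Sum>b\<in>P. \<Sum>c\<in>P. \<Sum>d\<in>P. dTheta a i * dTheta b j * dTheta c k * dTheta d l *
        (1 / real N * (\<Sum>\<alpha><n L. \<Sum>\<beta><n L. d2net \<alpha> a b * d2net \<beta> c d * fisher \<alpha> \<beta>)))
    + 1 / real N * (\<Sum>\<alpha><n L. \<Sum>\<beta><n L.
        ((\<Sum>a\<in>P. \<Sum>b\<in>P. \<Sum>c\<in>P. dTheta a i * dTheta b j * d2Theta c k l * d2net \<alpha> a b * dnet \<beta> c)
       + (\<Sum>a\<in>P. \<Sum>b\<in>P. \<Sum>c\<in>P. d2Theta a i j * dTheta b k * dTheta c l * dnet \<alpha> a * d2net \<beta> b c)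
       + (\<Sum>a\<in>P. \<Sum>b\<in>P. d2Theta a i j * d2Theta b k l * dnet \<alpha> a * dnet \<beta> b)) * fisher \<alpha> \<beta>)"
    unfolding Hd_def Jdd_def by (rule fisher_correction_algebra)
  finally show ?thesis
    by (simp add: cov_theta)
qed

end

theorem mainTheorem16:
  fixes \<sigma> :: "real \<Rightarrow> real" and L :: nat and n :: "nat \<Rightarrow> nat" and x :: "nat \<Rightarrow> real"
    and \<nu> :: "'y measure" and t :: "'y \<Rightarrow> nat \<Rightarrow> real" and N :: nat
    and \<Theta> :: "real^'m \<Rightarrow> (nat \<times> nat \<times> nat \<Rightarrow> real)" and \<xi>0 :: "real^'m"
    and i j k l :: 'm
  defines "P \<equiv> param_idx L n"
    and "\<theta>0 \<equiv> \<Theta> \<xi>0"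
    and "h \<equiv> hL \<sigma> L n x"
    and "S \<equiv> sample_space \<sigma> L n x \<nu> t N (\<Theta> \<xi>0)"
    and "J \<equiv> (\<lambda>a i. pdx (\<lambda>\<xi>. \<Theta> \<xi> a) i \<xi>0)"
    and "H \<equiv> (\<lambda>a i j. pdx (pdx (\<lambda>\<xi>. \<Theta> \<xi> a) j) i \<xi>0)"
    and "dh \<equiv> (\<lambda>\<alpha> a. pdt (\<lambda>\<theta>. hL \<sigma> L n x \<theta> \<alpha>) a (\<Theta> \<xi>0))"
    and "ddh \<equiv> (\<lambda>\<alpha> a b. pdt (pdt (\<lambda>\<theta>. hL \<sigma> L n x \<theta> \<alpha>) b) a (\<Theta> \<xi>0))"
  assumes L_pos: "1 \<le> L"
    and widths_pos: "\<forall>q\<le>L. 1 \<le> n q"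
    and N_pos: "0 < N"
    and sigma_C2: "C2_real \<sigma>"
    and reparam: "\<forall>a\<in>P. twice_differentiable (\<lambda>\<xi>. \<Theta> \<xi> a)"
    and t_meas: "\<forall>\<alpha><n L. (\<lambda>y. t y \<alpha>) \<in> borel_measurable \<nu>"
    and interior: "in_nat_interior \<nu> t (n L) (h \<theta>0)"
  shows
    "cov S (I1_xi \<sigma> L n x \<nu> t N \<Theta> \<xi>0 i j) (I1_xi \<sigma> L n x \<nu> t N \<Theta> \<xi>0 k l) =
       (\<Sum>a\<in>P. \<Sum>b\<in>P. \<Sum>c\<in>P. \<Sum>d\<in>P. J a i * J b j * J c k * J d l *
          cov S (I1_theta \<sigma> L n x \<nu> t N \<theta>0 a b) (I1_theta \<sigma> L n x \<nu> t N \<theta>0 c d))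
     \<and> cov S (I2_xi \<sigma> L n x \<nu> t N \<Theta> \<xi>0 i j) (I2_xi \<sigma> L n x \<nu> t N \<Theta> \<xi>0 k l) =
       (\<Sum>a\<in>P. \<Sum>b\<in>P. \<Sum>c\<in>P. \<Sum>d\<in>P. J a i * J b j * J c k * J d l *
          cov S (I2_theta \<sigma> L n x \<nu> t N \<theta>0 a b) (I2_theta \<sigma> L n x \<nu> t N \<theta>0 c d))
       + (1 / real N) * (\<Sum>\<alpha><n L. \<Sum>\<beta><n L.
           ((\<Sum>a\<in>P. \<Sum>b\<in>P. \<Sum>c\<in>P. J a i * J b j * H c k l * ddh \<alpha> a b * dh \<beta> c)
          + (\<Sum>a\<in>P. \<Sum>b\<in>P. \<Sum>c\<in>P. H a i j * J b k * J c l * dh \<alpha> a * ddh \<beta> b c)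
          + (\<Sum>a\<in>P. \<Sum>b\<in>P. H a i j * H b k l * dh \<alpha> a * dh \<beta> b))
           * fisher_h \<nu> t (n L) (h \<theta>0) \<alpha> \<beta>)"
proof -
  interpret network_reparam \<sigma> L n x \<nu> t N \<Theta> \<xi>0
    using N_pos sigma_C2 reparam t_meas interior
    by unfold_locales (simp_all add: P_def \<theta>0_def h_def)
  show ?thesis
    unfolding P_def \<theta>0_def h_def S_def J_def H_def dh_def ddh_def sample_space_eq
    using cov_I1_xi cov_I2_xi by blast
qed

end
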